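(* For every $\lambda\in\mathcal{P}^+$, the hypergeometric differential operator satisfies $$D\,m_\lambda=\epsilon_\lambda m_\lambda+\sum_{\mu\in\mathcal{P}^+,\ \mu\prec\lambda}b_{\lambda\mu}m_\mu,$$ with $\epsilon_\lambda=\langle\lambda+\rho_g,\lambda+\rho_g\rangle-\langle\rho_g,\rho_g\rangle$ and $$b_{\lambda\mu}=\frac{|W_\mu|}{|W_\lambda|}\sum_{\alpha\in[\lambda,\mu]}g_\alpha\langle\lambda,\alpha\rangle\,n_{\lambda\mu}(\alpha),$$ where $[\lambda,\mu]$ is the set of $\alpha\in R^+$ such that $\lambda-\ell\alpha\in W(\mu)$ for some $\ell\in\{1,2,\dots,[\langle\lambda,\alpha^\vee\rangle/2]\}$ (such $\ell$ is then unique), and $n_{\lambda\mu}(\alpha)=1$ if $\|\mu\|=\|P_\alpha(\lambda)\|$ and $n_{\lambda\mu}(\alpha)=2$ otherwise, with $P_\alpha=(\mathrm{Id}+r_\alpha)/2$.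
   Context: $E$ is a real Euclidean space (dimension $N$) spanned by an irreducible, not necessarily reduced, root system $R$ with Weyl group $W$, positive roots $R^+$; $\alpha^\vee=2\alpha/\langle\alpha,\alpha\rangle$, $r_\alpha(x)=x-\langle x,\alpha^\vee\rangle\alpha$. $\mathcal{Q}^+=\mathrm{Span}_{\mathbb{N}}(R^+)$; $\mathcal{P}$ weight lattice, $\mathcal{P}^+$ dominant weights, $\lambda\succeq\mu$ iff $\lambda-\mu\in\mathcal{Q}^+$. Formal exponentials $e^\lambda$, $m_\lambda=\sum_{\mu\in W(\lambda)}e^\mu$. $\partial_xe^\lambda=\langle\lambda,x\rangle e^\lambda$. Real parameters $g_\alpha$ with $g_{w(\alpha)}=g_\alpha$. The hypergeometric differential operator is $D=\sum_{j=1}^N\partial_{x_j}^2+\sum_{\alpha\in R^+}g_\alpha\frac{1+e^{-\alpha}}{1-e^{-\alpha}}\partial_\alpha$ ($x_j$ an orthonormal basis). $\rho_g=\frac12\sum_{\alpha\in R^+}g_\alpha\alpha$; $W_\mu$ is the stabilizer of $\mu$ in $W$; $[p]$ is the integer part of $p\ge0$. *)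

theory Defs
  imports "HOL-Analysis.Analysis"
begin

definition coroot :: "'a::euclidean_space \<Rightarrow> 'a" where
  "coroot \<alpha> = (2 / (\<alpha> \<bullet> \<alpha>)) *\<^sub>R \<alpha>"

definition refl :: "'a::euclidean_space \<Rightarrow> 'a \<Rightarrow> 'a" where
  "refl \<alpha> x = x - (x \<bullet> coroot \<alpha>) *\<^sub>R \<alpha>"

text \<open>Root system (not necessarily reduced) spanning the whole space.\<close>
definition root_system :: "'a::euclidean_space set \<Rightarrow> bool" where
  "root_system R \<longleftrightarrow> finite R \<and> 0 \<notin> R \<and> span R = UNIV \<and>
     (\<forall>\<alpha>\<in>R. refl \<alpha> ` R = R) \<and>
     (\<forall>\<alpha>\<in>R. \<forall>\<beta>\<in>R. \<beta> \<bullet> coroot \<alpha> \<in> \<int>)"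

definition irreducible_rs :: "'a::euclidean_space set \<Rightarrow> bool" where
  "irreducible_rs R \<longleftrightarrow> \<not> (\<exists>A B. A \<noteq> {} \<and> B \<noteq> {} \<and> A \<union> B = R \<and> A \<inter> B = {} \<and>
       (\<forall>a\<in>A. \<forall>b\<in>B. a \<bullet> b = 0))"

definition regular_vec :: "'a::euclidean_space set \<Rightarrow> 'a \<Rightarrow> bool" where
  "regular_vec R v \<longleftrightarrow> (\<forall>\<alpha>\<in>R. \<alpha> \<bullet> v \<noteq> 0)"

definition pos_roots :: "'a::euclidean_space set \<Rightarrow> 'a \<Rightarrow> 'a set" where
  "pos_roots R v = {\<alpha>\<in>R. \<alpha> \<bullet> v > 0}"

inductive_set weyl :: "'a::euclidean_space set \<Rightarrow> ('a \<Rightarrow> 'a) set" for R where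
  weyl_id: "id \<in> weyl R"
| weyl_step: "w \<in> weyl R \<Longrightarrow> \<alpha> \<in> R \<Longrightarrow> refl \<alpha> \<circ> w \<in> weyl R"

definition orbit :: "'a::euclidean_space set \<Rightarrow> 'a \<Rightarrow> 'a set" where
  "orbit R la = (%w. w la) ` weyl R"

definition stabilizer :: "'a::euclidean_space set \<Rightarrow> 'a \<Rightarrow> ('a \<Rightarrow> 'a) set" where
  "stabilizer R \<mu> = {w \<in> weyl R. w \<mu> = \<mu>}"

definition weights :: "'a::euclidean_space set \<Rightarrow> 'a set" where
  "weights R = {la. \<forall>\<alpha>\<in>R. la \<bullet> coroot \<alpha> \<in> \<int>}"

definition dominant :: "'a::euclidean_space set \<Rightarrow> 'a \<Rightarrow> 'a set" where
  "dominant R v = {la\<in>weights R. \<forall>\<alpha>\<in>pos_roots R v. la \<bullet> coroot \<alpha> \<ge> 0}"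

definition pos_cone :: "'a::euclidean_space set \<Rightarrow> 'a \<Rightarrow> 'a set" where
  "pos_cone R v = {x. \<exists>c::'a \<Rightarrow> nat. x = (\<Sum>\<alpha>\<in>pos_roots R v. real (c \<alpha>) *\<^sub>R \<alpha>)}"

definition dom_le :: "'a::euclidean_space set \<Rightarrow> 'a \<Rightarrow> 'a \<Rightarrow> 'a \<Rightarrow> bool" where
  "dom_le R v \<mu> la \<longleftrightarrow> la - \<mu> \<in> pos_cone R v"

definition dom_less :: "'a::euclidean_space set \<Rightarrow> 'a \<Rightarrow> 'a \<Rightarrow> 'a \<Rightarrow> bool" where
  "dom_less R v \<mu> la \<longleftrightarrow> dom_le R v \<mu> la \<and> \<mu> \<noteq> la"

text \<open>A formal (finite or formal-series) combination \<Sum> c(\<nu>) e^\<nu> is represented by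
  its coefficient function c :: 'a \<Rightarrow> real.\<close>

definition orbit_sum :: "'a::euclidean_space set \<Rightarrow> 'a \<Rightarrow> 'a \<Rightarrow> real" where
  "orbit_sum R la = indicator (orbit R la)"

text \<open>\<partial>_x e^\<nu> = <\<nu>,x> e^\<nu>\<close>
definition dderiv :: "'a::euclidean_space \<Rightarrow> ('a \<Rightarrow> real) \<Rightarrow> 'a \<Rightarrow> real" where
  "dderiv x f = (%\<nu>. (\<nu> \<bullet> x) * f \<nu>)"

definition laplacian :: "('a::euclidean_space \<Rightarrow> real) \<Rightarrow> 'a \<Rightarrow> real" where
  "laplacian f = (%\<nu>. \<Sum>j\<in>Basis. dderiv j (dderiv j f) \<nu>)"

text \<open>Multiplication by (1+e^{-\<alpha>})/(1-e^{-\<alpha>}) = 1 + 2 \<Sum>_{k\<ge>1} e^{-k\<alpha>}.\<close>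
definition mult_coth :: "'a::euclidean_space \<Rightarrow> ('a \<Rightarrow> real) \<Rightarrow> 'a \<Rightarrow> real" where
  "mult_coth \<alpha> f = (%\<nu>. f \<nu> + 2 * (\<Sum>k. f (\<nu> + real (Suc k) *\<^sub>R \<alpha>)))"

definition hyp_op :: "'a::euclidean_space set \<Rightarrow> 'a \<Rightarrow> ('a \<Rightarrow> real) \<Rightarrow> ('a \<Rightarrow> real) \<Rightarrow> 'a \<Rightarrow> real" where
  "hyp_op R v g f = (%\<nu>. laplacian f \<nu> +
      (\<Sum>\<alpha>\<in>pos_roots R v. g \<alpha> * mult_coth \<alpha> (dderiv \<alpha> f) \<nu>))"

definition rho :: "'a::euclidean_space set \<Rightarrow> 'a \<Rightarrow> ('a \<Rightarrow> real) \<Rightarrow> 'a" where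
  "rho R v g = (1/2) *\<^sub>R (\<Sum>\<alpha>\<in>pos_roots R v. g \<alpha> *\<^sub>R \<alpha>)"

definition eigval :: "'a::euclidean_space set \<Rightarrow> 'a \<Rightarrow> ('a \<Rightarrow> real) \<Rightarrow> 'a \<Rightarrow> real" where
  "eigval R v g la = (la + rho R v g) \<bullet> (la + rho R v g) - rho R v g \<bullet> rho R v g"

definition proj :: "'a::euclidean_space \<Rightarrow> 'a \<Rightarrow> 'a" where
  "proj \<alpha> x = (1/2) *\<^sub>R (x + refl \<alpha> x)"

definition root_interval :: "'a::euclidean_space set \<Rightarrow> 'a \<Rightarrow> 'a \<Rightarrow> 'a \<Rightarrow> 'a set" where
  "root_interval R v la \<mu> = {\<alpha>\<in>pos_roots R v. \<exists>l::nat. 1 \<le> l \<and>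
       real l \<le> of_int \<lfloor>(la \<bullet> coroot \<alpha>) / 2\<rfloor> \<and> la - real l *\<^sub>R \<alpha> \<in> orbit R \<mu>}"

definition nmult :: "'a::euclidean_space \<Rightarrow> 'a \<Rightarrow> 'a \<Rightarrow> real" where
  "nmult la \<mu> \<alpha> = (if norm \<mu> = norm (proj \<alpha> la) then 1 else 2)"

definition bcoef :: "'a::euclidean_space set \<Rightarrow> 'a \<Rightarrow> ('a \<Rightarrow> real) \<Rightarrow> 'a \<Rightarrow> 'a \<Rightarrow> real" where
  "bcoef R v g la \<mu> = real (card (stabilizer R \<mu>)) / real (card (stabilizer R la)) *
     (\<Sum>\<alpha>\<in>root_interval R v la \<mu>. g \<alpha> * (la \<bullet> \<alpha>) * nmult la \<mu> \<alpha>)"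

end

theory Submission
  imports Defs
begin

(*
  On a formal exponential e^y the Laplacian acts as |y|^2, and
  (1 + e^-a)/(1 - e^-a) d_a = (1 + 2 sum_{k>0} e^-ka) d_a sends e^x down the a-string below x.
  So the coefficient of e^y in D m_la is |y|^2 [y in W la] plus, for each positive root a,
  g_a ([y in W la] <y,a> + 2 sum <x,a>), the sum running over the points x of W la strictly
  above y on the a-string through y.  Reflecting the whole a-string through y in r_a shows
  that this a-term is unchanged under a -> -a, so the coefficient is W-invariant and only
  dominant y matter.

  Orbit points lying above y on a positive string dominate y, so at y = la only the
  diagonal terms survive, giving <la,la> + 2 <la,rho_g>, and the coefficient vanishes unless
  y is below la.  For dominant mu < la, summing the coefficient over W mu and exchanging sums
  gives |W mu| times it equal to |W la| times a weighted count of the y in W mu with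
  la - y a positive multiple of a; orbit-stabilizer turns the ratio of orbit sizes into
  |W_mu| / |W_la|.  The la - k a in W mu are symmetric under k -> <la,a^v> - k and have the
  norm of mu, which pins them down to l and <la,a^v> - l: one point if |mu| = |P_a la|, two
  otherwise.

  That a dominant element is the only dominant point of its orbit is proved with simple roots:
  they are linearly independent, their reflections generate W, and a reflection word fixing
  the chamber shortens by the deletion property.
*)

section \<open>Reflections\<close>

lemma inner_coroot: "x \<bullet> coroot a = 2 * (x \<bullet> a) / (a \<bullet> a)"
  by (simp add: coroot_def inner_commute)

lemma refl_zero [simp]: "refl 0 = id"
  by (auto simp: refl_def coroot_def)

lemma inner_refl_left: "refl a x \<bullet> y = x \<bullet> y - (x \<bullet> coroot a) * (a \<bullet> y)"
  by (simp add: refl_def inner_diff_left)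

lemma linear_refl: "linear (refl a)"
  by (rule linearI) (simp_all add: refl_def inner_add_left algebra_simps)

lemma refl_root: "refl a a = - a"
  by (cases "a = 0") (simp_all add: refl_def inner_coroot scaleR_2)

lemma inner_refl_root: "refl a x \<bullet> a = - (x \<bullet> a)"
  by (cases "a = 0") (simp_all add: inner_refl_left inner_coroot)

lemma refl_refl [simp]: "refl a (refl a x) = x"
proof -
  have "refl a x \<bullet> coroot a = - (x \<bullet> coroot a)"
    using inner_refl_root[of a x] by (simp add: inner_coroot)
  then show ?thesis by (simp add: refl_def[of a "refl a x"]) (simp add: refl_def)
qed

lemma refl_eq_self: "x \<bullet> a = 0 \<Longrightarrow> refl a x = x"
  by (simp add: refl_def inner_coroot)

lemma refl_scaleR_root: "c \<noteq> 0 \<Longrightarrow> refl (c *\<^sub>R a) = refl a"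
  by (rule ext) (simp add: refl_def inner_coroot field_simps power2_eq_square)

lemma orthogonal_transformation_refl: "orthogonal_transformation (refl a)"
proof (cases "a = 0")
  case False
  then show ?thesis
    by (simp add: orthogonal_transformation_def linear_refl refl_def inner_coroot
        inner_diff_left inner_diff_right inner_commute field_simps)
qed (simp add: id_def)

lemma orthogonal_transformation_coroot:
  "orthogonal_transformation u \<Longrightarrow> u (coroot a) = coroot (u a)"
  by (simp add: coroot_def orthogonal_transformation_def linear_scale)

lemma orthogonal_transformation_refl_conj:
  "orthogonal_transformation u \<Longrightarrow> u (refl a x) = refl (u a) (u x)"
  by (simp add: refl_def orthogonal_transformation_coroot[symmetric] linear_diff linear_scale
      orthogonal_transformation_linear) (simp add: orthogonal_transformation_def)

lemma refl_lowers_height: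
  assumes "0 < \<delta> \<bullet> \<gamma>" and "0 < \<delta> \<bullet> v"
  shows "refl \<delta> \<gamma> \<bullet> v < \<gamma> \<bullet> v"
proof -
  have "\<delta> \<noteq> 0" using assms by auto
  then have "0 < \<gamma> \<bullet> coroot \<delta>"
    using assms by (simp add: inner_coroot inner_commute)
  then show ?thesis
    using assms by (simp add: inner_refl_left)
qed

lemma inner_coroot_nonneg_iff: "\<alpha> \<noteq> 0 \<Longrightarrow> 0 \<le> x \<bullet> coroot \<alpha> \<longleftrightarrow> 0 \<le> x \<bullet> \<alpha>"
proof -
  assume "\<alpha> \<noteq> 0"
  then have pos: "0 < 2 / (\<alpha> \<bullet> \<alpha>)" by simp
  have "x \<bullet> coroot \<alpha> = (2 / (\<alpha> \<bullet> \<alpha>)) * (x \<bullet> \<alpha>)"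
    by (simp add: inner_coroot)
  then show ?thesis
    using mult_le_cancel_left_pos[OF pos, of 0 "x \<bullet> \<alpha>"] by simp
qed

lemma norm_diff_scaleR_sq:
  fixes la \<beta> :: "'a::euclidean_space"
  assumes "\<beta> \<noteq> 0"
  shows "(norm (la - t *\<^sub>R \<beta>))\<^sup>2 = (norm la)\<^sup>2 - t * (la \<bullet> coroot \<beta> - t) * (\<beta> \<bullet> \<beta>)"
proof -
  have "(norm (la - t *\<^sub>R \<beta>))\<^sup>2 = la \<bullet> la - 2 * t * (la \<bullet> \<beta>) + t * t * (\<beta> \<bullet> \<beta>)"
    by (simp add: power2_norm_eq_inner inner_diff_left inner_diff_right inner_commute algebra_simps)
  also have "la \<bullet> \<beta> = (la \<bullet> coroot \<beta>) * (\<beta> \<bullet> \<beta>) / 2"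
    using assms by (simp add: inner_coroot)
  finally show ?thesis
    by (simp add: power2_norm_eq_inner algebra_simps)
qed

fun refl_word :: "'a::euclidean_space list \<Rightarrow> 'a \<Rightarrow> 'a" where
  "refl_word [] = id"
| "refl_word (a # l) = refl a \<circ> refl_word l"

lemma refl_word_append: "refl_word (l1 @ l2) = refl_word l1 \<circ> refl_word l2"
  by (induction l1) (simp_all add: comp_assoc)

lemma refl_word_rev [simp]: "refl_word (rev l) (refl_word l x) = x"
  by (induction l arbitrary: x) (simp_all add: refl_word_append)

lemma orthogonal_transformation_refl_word: "orthogonal_transformation (refl_word l)"
proof (induction l)
  case (Cons a l)
  then show ?case
    unfolding refl_word.simps by (rule orthogonal_transformation_compose[OF orthogonal_transformation_refl])
qed (simp add: id_def)

lemma obtuse_combinations_eq_zero: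
  fixes P N :: "'a::euclidean_space set"
  assumes "finite P" "finite N"
    and obtuse: "\<And>x y. x \<in> P \<Longrightarrow> y \<in> N \<Longrightarrow> x \<bullet> y \<le> 0"
    and nonneg: "\<And>x. x \<in> P \<Longrightarrow> 0 \<le> a x" "\<And>y. y \<in> N \<Longrightarrow> 0 \<le> b y"
    and eq: "(\<Sum>x\<in>P. a x *\<^sub>R x) = (\<Sum>y\<in>N. b y *\<^sub>R y)"
  shows "(\<Sum>x\<in>P. a x *\<^sub>R x) = 0"
proof -
  let ?e = "\<Sum>x\<in>P. a x *\<^sub>R x"
  have "?e \<bullet> ?e = (\<Sum>x\<in>P. a x *\<^sub>R x) \<bullet> (\<Sum>y\<in>N. b y *\<^sub>R y)"
    by (simp only: eq)
  also have "\<dots> = (\<Sum>y\<in>N. \<Sum>x\<in>P. (a x * b y) * (x \<bullet> y))"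
    by (simp add: inner_sum_left inner_sum_right sum_distrib_left mult_ac)
  also have "\<dots> \<le> 0"
  proof (intro sum_nonpos)
    fix y x assume "y \<in> N" "x \<in> P"
    then show "(a x * b y) * (x \<bullet> y) \<le> 0"
      using obtuse nonneg by (simp add: mult_nonneg_nonpos)
  qed
  finally have "?e \<bullet> ?e = 0"
    using inner_ge_zero[of ?e] by linarith
  then show ?thesis
    by simp
qed

lemma independent_if_pairwise_obtuse:
  fixes S :: "'a::euclidean_space set" and v :: 'a
  assumes fin: "finite S" and pos: "\<And>x. x \<in> S \<Longrightarrow> 0 < x \<bullet> v"
    and obtuse: "\<And>x y. x \<in> S \<Longrightarrow> y \<in> S \<Longrightarrow> x \<noteq> y \<Longrightarrow> x \<bullet> y \<le> 0"
  shows "independent S"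
proof
  assume "dependent S"
  then obtain u where u: "\<exists>x\<in>S. u x \<noteq> 0" "(\<Sum>x\<in>S. u x *\<^sub>R x) = 0"
    using dependent_finite[OF fin] by auto
  define P N where "P = {x\<in>S. 0 < u x}" and "N = {x\<in>S. u x < 0}"
  have fin_PN: "finite P" "finite N"
    using fin by (auto simp: P_def N_def)
  have "(\<Sum>x\<in>S. u x *\<^sub>R x) = (\<Sum>x\<in>P \<union> N. u x *\<^sub>R x)"
    by (rule sum.mono_neutral_right[OF fin]) (auto simp: P_def N_def)
  also have "\<dots> = (\<Sum>x\<in>P. u x *\<^sub>R x) + (\<Sum>x\<in>N. u x *\<^sub>R x)"
    by (rule sum.union_disjoint[OF fin_PN]) (auto simp: P_def N_def)
  finally have eq: "(\<Sum>x\<in>P. u x *\<^sub>R x) = (\<Sum>x\<in>N. (- u x) *\<^sub>R x)"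
    using u(2) by (simp add: sum_negf eq_neg_iff_add_eq_0)
  have zero: "(\<Sum>x\<in>P. u x *\<^sub>R x) = 0"
    by (rule obtuse_combinations_eq_zero[OF fin_PN _ _ _ eq]) (auto simp: P_def N_def intro: obtuse)
  have "P = {}"
  proof (rule ccontr)
    assume "P \<noteq> {}"
    then have "0 < (\<Sum>x\<in>P. u x * (x \<bullet> v))"
      using fin_PN pos by (intro sum_pos) (auto simp: P_def)
    also have "\<dots> = (\<Sum>x\<in>P. u x *\<^sub>R x) \<bullet> v"
      by (simp add: inner_sum_left)
    finally show False using zero by simp
  qed
  moreover have "N = {}"
  proof (rule ccontr)
    assume "N \<noteq> {}"
    then have "0 < (\<Sum>x\<in>N. (- u x) * (x \<bullet> v))"
      using fin_PN pos by (intro sum_pos) (auto simp: N_def mult_neg_pos)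
    also have "\<dots> = (\<Sum>x\<in>N. (- u x) *\<^sub>R x) \<bullet> v"
      by (simp add: inner_sum_left)
    finally show False using zero eq by simp
  qed
  ultimately show False
    using u(1) by (auto simp: P_def N_def) (meson linorder_neqE_linordered_idom)
qed

lemma ex_Suc_switch: "P n \<Longrightarrow> \<not> P 0 \<Longrightarrow> \<exists>j<n. \<not> P j \<and> P (Suc j)"
  by (induction n) (auto intro: less_SucI)

lemma finite_ex_arg_max:
  fixes f :: "'a \<Rightarrow> 'b::linorder"
  assumes "finite A" "A \<noteq> {}"
  obtains x where "x \<in> A" "\<And>y. y \<in> A \<Longrightarrow> f y \<le> f x"
proof -
  have "Max (f ` A) \<in> f ` A"
    using assms by simp
  then obtain x where "x \<in> A" "f x = Max (f ` A)"
    by (metis imageE)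
  then show ?thesis
    using assms(1) by (intro that) auto
qed

section \<open>The operator on indicator functions\<close>

definition string_above :: "'a::euclidean_space \<Rightarrow> 'a \<Rightarrow> 'a \<Rightarrow> bool" where
  "string_above \<alpha> y x \<longleftrightarrow> (\<exists>k::nat. x = y + real (Suc k) *\<^sub>R \<alpha>)"

definition upper_string_sum :: "'a::euclidean_space set \<Rightarrow> 'a \<Rightarrow> 'a \<Rightarrow> real" where
  "upper_string_sum A \<alpha> y = (\<Sum>x\<in>{x\<in>A. string_above \<alpha> y x}. x \<bullet> \<alpha>)"

lemma string_above_iff_int: "string_above \<alpha> y x \<longleftrightarrow> (\<exists>k::int. 0 < k \<and> x = y + of_int k *\<^sub>R \<alpha>)"
proof
  assume "string_above \<alpha> y x"
  then obtain k :: nat where "x = y + real (Suc k) *\<^sub>R \<alpha>"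
    by (auto simp: string_above_def)
  then show "\<exists>k::int. 0 < k \<and> x = y + of_int k *\<^sub>R \<alpha>"
    by (intro exI[of _ "int (Suc k)"]) simp
next
  assume "\<exists>k::int. 0 < k \<and> x = y + of_int k *\<^sub>R \<alpha>"
  then obtain k :: int where "0 < k" "x = y + of_int k *\<^sub>R \<alpha>"
    by blast
  moreover have "real (Suc (nat (k - 1))) = of_int k"
    using \<open>0 < k\<close> by simp
  ultimately show "string_above \<alpha> y x"
    unfolding string_above_def by metis
qed

lemma string_above_uminus_iff_int:
  "string_above (- \<alpha>) y x \<longleftrightarrow> (\<exists>k::int. k < 0 \<and> x = y + of_int k *\<^sub>R \<alpha>)"
proof -
  have "(\<exists>k::int. 0 < k \<and> x = y + of_int k *\<^sub>R - \<alpha>) \<longleftrightarrow> (\<exists>k::int. 0 < - k \<and> x = y + of_int (- k) *\<^sub>R - \<alpha>)"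
    by (metis minus_minus)
  then show ?thesis
    by (simp add: string_above_iff_int)
qed

lemma string_above_self: "\<alpha> \<noteq> 0 \<Longrightarrow> \<not> string_above \<alpha> y y"
  by (auto simp: string_above_def)

lemma string_above_opposite:
  assumes "\<alpha> \<noteq> 0" "string_above \<alpha> y x"
  shows "\<not> string_above (- \<alpha>) y x"
proof
  assume "string_above (- \<alpha>) y x"
  with assms(2) obtain k l :: nat where "y + real (Suc k) *\<^sub>R \<alpha> = y + real (Suc l) *\<^sub>R - \<alpha>"
    unfolding string_above_def by metis
  then have "real (Suc k) *\<^sub>R \<alpha> = - (real (Suc l) *\<^sub>R \<alpha>)"
    by (metis add_left_cancel scaleR_minus_right)
  then have "(real (Suc k) + real (Suc l)) *\<^sub>R \<alpha> = 0"
    by (simp only: scaleR_add_left) simp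
  then show False
    using assms(1) by (simp add: add_pos_pos)
qed

lemma string_int_cases:
  "(\<exists>k::int. x = y + of_int k *\<^sub>R \<alpha>) \<longleftrightarrow> x = y \<or> string_above \<alpha> y x \<or> string_above (- \<alpha>) y x"
proof
  assume "\<exists>k::int. x = y + of_int k *\<^sub>R \<alpha>"
  then obtain k :: int where "x = y + of_int k *\<^sub>R \<alpha>" by blast
  then show "x = y \<or> string_above \<alpha> y x \<or> string_above (- \<alpha>) y x"
    unfolding string_above_uminus_iff_int unfolding string_above_iff_int
    by (cases k "0::int" rule: linorder_cases) auto
next
  show "x = y \<or> string_above \<alpha> y x \<or> string_above (- \<alpha>) y x \<Longrightarrow> \<exists>k::int. x = y + of_int k *\<^sub>R \<alpha>"
    unfolding string_above_uminus_iff_int unfolding string_above_iff_int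
    by (auto intro: exI[of _ 0])
qed

lemma laplacian_eq: "laplacian f y = (norm y)\<^sup>2 * f y"
proof -
  have "laplacian f y = (\<Sum>j\<in>Basis. (y \<bullet> j) * (y \<bullet> j)) * f y"
    by (simp add: laplacian_def dderiv_def sum_distrib_right mult.assoc)
  then show ?thesis
    by (simp add: euclidean_inner[of y y, symmetric] power2_norm_eq_inner)
qed

lemma suminf_string_indicator:
  fixes A :: "'a::euclidean_space set"
  assumes A: "finite A" and \<alpha>: "\<alpha> \<noteq> 0"
  shows "(\<Sum>k. dderiv \<alpha> (indicator A) (y + real (Suc k) *\<^sub>R \<alpha>)) = upper_string_sum A \<alpha> y"
proof -
  define p where "p k = y + real (Suc k) *\<^sub>R \<alpha>" for k :: nat
  define N where "N = {k. p k \<in> A}"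
  have "inj p"
    using \<alpha> by (auto intro!: injI simp: p_def)
  have "p ` N \<subseteq> A"
    by (auto simp: N_def)
  then have "finite N"
    using finite_subset[OF _ A] finite_image_iff[OF inj_on_subset[OF \<open>inj p\<close> subset_UNIV]] by blast
  have "(\<Sum>k. dderiv \<alpha> (indicator A) (p k)) = (\<Sum>k\<in>N. dderiv \<alpha> (indicator A) (p k))"
    by (rule suminf_finite[OF \<open>finite N\<close>]) (simp add: N_def dderiv_def)
  also have "\<dots> = (\<Sum>k\<in>N. p k \<bullet> \<alpha>)"
    by (simp add: N_def dderiv_def)
  also have "\<dots> = (\<Sum>x\<in>p ` N. x \<bullet> \<alpha>)"
    using \<open>inj p\<close> by (simp add: sum.reindex inj_on_subset)
  also have "p ` N = {x\<in>A. string_above \<alpha> y x}"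
    by (auto simp: N_def p_def string_above_def)
  finally show ?thesis
    by (simp add: upper_string_sum_def p_def)
qed

lemma mult_coth_dderiv_indicator:
  assumes "finite A" "\<alpha> \<noteq> 0"
  shows "mult_coth \<alpha> (dderiv \<alpha> (indicator A)) y = indicator A y * (y \<bullet> \<alpha>) + 2 * upper_string_sum A \<alpha> y"
  using suminf_string_indicator[OF assms] by (simp add: mult_coth_def dderiv_def)

section \<open>Root systems with a choice of positive roots\<close>

locale positive_system =
  fixes R :: "'a::euclidean_space set" and v :: 'a
  assumes root_system: "root_system R" and regular: "regular_vec R v"
begin

abbreviation "Rp \<equiv> pos_roots R v"

abbreviation "W \<equiv> weyl R"

lemma finite_roots: "finite R"
  using root_system by (simp add: root_system_def)

lemma root_nonzero: "\<alpha> \<in> R \<Longrightarrow> \<alpha> \<noteq> 0"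
  using root_system by (auto simp: root_system_def)

lemma span_roots: "span R = UNIV"
  using root_system by (simp add: root_system_def)

lemma refl_in_roots: "\<alpha> \<in> R \<Longrightarrow> \<beta> \<in> R \<Longrightarrow> refl \<alpha> \<beta> \<in> R"
  using root_system by (auto simp: root_system_def)

lemma inner_coroot_Ints: "\<alpha> \<in> R \<Longrightarrow> \<beta> \<in> R \<Longrightarrow> \<beta> \<bullet> coroot \<alpha> \<in> \<int>"
  using root_system by (simp add: root_system_def)

lemma uminus_in_roots: "\<alpha> \<in> R \<Longrightarrow> - \<alpha> \<in> R"
  using refl_in_roots[of \<alpha> \<alpha>] by (simp add: refl_root)

lemma pos_roots_iff: "\<alpha> \<in> Rp \<longleftrightarrow> \<alpha> \<in> R \<and> 0 < \<alpha> \<bullet> v"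
  by (simp add: pos_roots_def)

lemma pos_roots_subset: "Rp \<subseteq> R"
  by (auto simp: pos_roots_iff)

lemma finite_pos_roots: "finite Rp"
  using finite_roots pos_roots_subset finite_subset by blast

lemma pos_root_nonzero: "\<alpha> \<in> Rp \<Longrightarrow> \<alpha> \<noteq> 0"
  by (auto simp: pos_roots_iff)

lemma pos_or_neg_root: "\<alpha> \<in> R \<Longrightarrow> \<alpha> \<in> Rp \<or> - \<alpha> \<in> Rp"
  using regular uminus_in_roots[of \<alpha>] by (auto simp: pos_roots_iff regular_vec_def)

lemma uminus_pos_root: "\<alpha> \<in> Rp \<Longrightarrow> - \<alpha> \<notin> Rp"
  by (simp add: pos_roots_iff)

lemma roots_eq_pos_union_neg: "R = Rp \<union> uminus ` Rp"
proof
  show "R \<subseteq> Rp \<union> uminus ` Rp"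
    using pos_or_neg_root by (metis UnI1 UnI2 image_eqI minus_minus subsetI)
qed (use pos_roots_subset uminus_in_roots in auto)

lemma sum_roots_even:
  fixes f :: "'a \<Rightarrow> real"
  assumes "\<And>\<alpha>. \<alpha> \<in> R \<Longrightarrow> f (- \<alpha>) = f \<alpha>"
  shows "(\<Sum>\<alpha>\<in>R. f \<alpha>) = 2 * (\<Sum>\<alpha>\<in>Rp. f \<alpha>)"
proof -
  have "(\<Sum>\<alpha>\<in>R. f \<alpha>) = (\<Sum>\<alpha>\<in>Rp. f \<alpha>) + (\<Sum>\<alpha>\<in>uminus ` Rp. f \<alpha>)"
    by (subst roots_eq_pos_union_neg, rule sum.union_disjoint)
      (use finite_pos_roots uminus_pos_root in auto)
  also have "(\<Sum>\<alpha>\<in>uminus ` Rp. f \<alpha>) = (\<Sum>\<alpha>\<in>Rp. f \<alpha>)"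
    using assms pos_roots_subset
    by (subst sum.reindex) (auto simp: inj_on_def intro!: sum.cong)
  finally show ?thesis by simp
qed

subsection \<open>The Weyl group\<close>

lemma orthogonal_transformation_weyl: "w \<in> W \<Longrightarrow> orthogonal_transformation w"
proof (induction rule: weyl.induct)
  case weyl_id
  then show ?case by (simp add: id_def)
next
  case (weyl_step w \<alpha>)
  show ?case
    using weyl_step.IH by (rule orthogonal_transformation_compose[OF orthogonal_transformation_refl])
qed

lemma weyl_root: "w \<in> W \<Longrightarrow> \<alpha> \<in> R \<Longrightarrow> w \<alpha> \<in> R"
  by (induction rule: weyl.induct) (auto intro: refl_in_roots)

lemma weyl_comp: "w \<in> W \<Longrightarrow> u \<in> W \<Longrightarrow> w \<circ> u \<in> W"
  by (induction rule: weyl.induct) (simp_all add: comp_assoc weyl.weyl_step)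

lemma refl_in_weyl: "\<alpha> \<in> R \<Longrightarrow> refl \<alpha> \<in> W"
  using weyl.weyl_step[OF weyl.weyl_id] by simp

lemma inv_in_weyl: "w \<in> W \<Longrightarrow> inv w \<in> W"
proof (induction rule: weyl.induct)
  case weyl_id
  then show ?case by (metis inv_id weyl.weyl_id)
next
  case (weyl_step w \<alpha>)
  have "bij w" "bij (refl \<alpha>)"
    by (rule orthogonal_transformation_bij, rule orthogonal_transformation_weyl[OF weyl_step.hyps(1)])
      (rule orthogonal_transformation_bij[OF orthogonal_transformation_refl])
  moreover have "inv (refl \<alpha>) = refl \<alpha>"
    by (rule inv_unique_comp) (auto simp: fun_eq_iff)
  ultimately show ?case
    using weyl_comp[OF weyl_step.IH refl_in_weyl[OF weyl_step.hyps(2)]] by (simp only: o_inv_distrib)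
qed

lemma weyl_inv_apply [simp]: "w \<in> W \<Longrightarrow> inv w (w x) = x"
  by (simp add: inv_f_f orthogonal_transformation_inj orthogonal_transformation_weyl)

lemma weyl_apply_inv [simp]: "w \<in> W \<Longrightarrow> w (inv w x) = x"
  by (meson orthogonal_transformation_surj orthogonal_transformation_weyl surj_f_inv_f)

lemma weyl_inner: "w \<in> W \<Longrightarrow> w x \<bullet> w y = x \<bullet> y"
  using orthogonal_transformation_weyl by (simp add: orthogonal_transformation_def)

lemma weyl_norm: "w \<in> W \<Longrightarrow> norm (w x) = norm x"
  using orthogonal_transformation_weyl orthogonal_transformation_norm by blast

lemma weyl_inj: "w \<in> W \<Longrightarrow> inj w"
  using orthogonal_transformation_weyl orthogonal_transformation_inj by blast

lemma weyl_linear: "w \<in> W \<Longrightarrow> linear w"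
  using orthogonal_transformation_weyl orthogonal_transformation_linear by blast

lemma weyl_image_roots: "w \<in> W \<Longrightarrow> w ` R = R"
  by (rule endo_inj_surj[OF finite_roots])
    (auto simp: weyl_root intro: inj_on_subset[OF weyl_inj])

lemma sum_roots_weyl: "w \<in> W \<Longrightarrow> (\<Sum>\<alpha>\<in>R. f (w \<alpha>)) = (\<Sum>\<alpha>\<in>R. f \<alpha>)"
  using sum.reindex[of w R f] inj_on_subset[OF weyl_inj] weyl_image_roots by auto

lemma finite_weyl: "finite W"
proof -
  have "inj_on (\<lambda>w. restrict w R) W"
  proof (rule inj_onI)
    fix w u assume w: "w \<in> W" and u: "u \<in> W" and eq: "restrict w R = restrict u R"
    have "w x = u x" if "x \<in> R" for x
      using fun_cong[OF eq, of x] that by simp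
    then have "w x = u x" for x
      using linear_eq_on_span[OF weyl_linear[OF w] weyl_linear[OF u]] span_roots by blast
    then show "w = u" by blast
  qed
  moreover have "(\<lambda>w. restrict w R) ` W \<subseteq> PiE R (\<lambda>_. R)"
    using weyl_root by auto
  moreover have "finite (PiE R (\<lambda>_. R))"
    using finite_roots by (simp add: finite_PiE)
  ultimately show ?thesis
    using finite_imageD finite_subset by blast
qed

lemma weyl_weights: "w \<in> W \<Longrightarrow> x \<in> weights R \<Longrightarrow> w x \<in> weights R"
  unfolding weights_def mem_Collect_eq
proof
  fix \<alpha> assume w: "w \<in> W" and x: "\<forall>\<alpha>\<in>R. x \<bullet> coroot \<alpha> \<in> \<int>" and "\<alpha> \<in> R"
  then have "inv w \<alpha> \<in> R"
    using weyl_root inv_in_weyl by blast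
  moreover have "w x \<bullet> coroot \<alpha> = x \<bullet> coroot (inv w \<alpha>)"
    using w weyl_inner[OF w, of x "coroot (inv w \<alpha>)"]
    by (simp add: orthogonal_transformation_coroot orthogonal_transformation_weyl)
  ultimately show "w x \<bullet> coroot \<alpha> \<in> \<int>"
    using x by simp
qed

lemma orbit_iff: "y \<in> orbit R x \<longleftrightarrow> (\<exists>w\<in>W. y = w x)"
  by (auto simp: orbit_def)

lemma finite_orbit: "finite (orbit R x)"
  using finite_weyl by (simp add: orbit_def)

lemma orbit_self: "x \<in> orbit R x"
  unfolding orbit_iff by (metis id_apply weyl.weyl_id)

lemma orbit_closed: "y \<in> orbit R x \<Longrightarrow> w \<in> W \<Longrightarrow> w y \<in> orbit R x"
  unfolding orbit_iff by (metis comp_apply weyl_comp)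

lemma orbit_closed_iff: "w \<in> W \<Longrightarrow> w y \<in> orbit R x \<longleftrightarrow> y \<in> orbit R x"
  using orbit_closed inv_in_weyl weyl_inv_apply by metis

lemma orbit_sym: "y \<in> orbit R x \<Longrightarrow> x \<in> orbit R y"
  unfolding orbit_iff by (metis inv_in_weyl weyl_inv_apply)

lemma orbit_trans: "y \<in> orbit R x \<Longrightarrow> z \<in> orbit R y \<Longrightarrow> z \<in> orbit R x"
  unfolding orbit_iff by (metis comp_apply weyl_comp)

lemma orbit_weights: "x \<in> weights R \<Longrightarrow> y \<in> orbit R x \<Longrightarrow> y \<in> weights R"
  using weyl_weights by (auto simp: orbit_iff)

lemma orbit_norm: "y \<in> orbit R x \<Longrightarrow> norm y = norm x"
  using weyl_norm by (auto simp: orbit_iff)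

subsection \<open>Root strings in Weyl orbits\<close>

lemma string_above_weyl:
  assumes w: "w \<in> W"
  shows "string_above (w \<alpha>) (w y) (w x) \<longleftrightarrow> string_above \<alpha> y x"
proof -
  have "w y + real (Suc k) *\<^sub>R w \<alpha> = w (y + real (Suc k) *\<^sub>R \<alpha>)" for k
    using weyl_linear[OF w] by (simp add: linear_add linear_scale)
  then show ?thesis
    by (simp add: string_above_def inj_eq[OF weyl_inj[OF w]])
qed

lemma orbit_Collect_weyl:
  assumes w: "w \<in> W" and PQ: "\<And>x. Q (w x) \<longleftrightarrow> P x"
  shows "{x\<in>orbit R z. Q x} = w ` {x\<in>orbit R z. P x}"
proof
  show "w ` {x\<in>orbit R z. P x} \<subseteq> {x\<in>orbit R z. Q x}"
    using orbit_closed[OF _ w] by (auto simp: PQ)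
  show "{x\<in>orbit R z. Q x} \<subseteq> w ` {x\<in>orbit R z. P x}"
  proof
    fix x assume "x \<in> {x\<in>orbit R z. Q x}"
    then have "inv w x \<in> {x\<in>orbit R z. P x}"
      using PQ[of "inv w x"] orbit_closed_iff[OF w, of "inv w x"] w by simp
    then show "x \<in> w ` {x\<in>orbit R z. P x}"
      by (rule image_eqI[rotated]) (simp add: w)
  qed
qed

lemma upper_string_sum_weyl:
  assumes w: "w \<in> W"
  shows "upper_string_sum (orbit R z) (w \<alpha>) (w y) = upper_string_sum (orbit R z) \<alpha> y"
proof -
  have "upper_string_sum (orbit R z) (w \<alpha>) (w y) =
      (\<Sum>x\<in>w ` {x\<in>orbit R z. string_above \<alpha> y x}. x \<bullet> w \<alpha>)"
    unfolding upper_string_sum_def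
    using orbit_Collect_weyl[OF w, of "string_above (w \<alpha>) (w y)" "string_above \<alpha> y"]
      string_above_weyl[OF w] by simp
  also have "\<dots> = (\<Sum>x\<in>{x\<in>orbit R z. string_above \<alpha> y x}. w x \<bullet> w \<alpha>)"
    by (rule sum.reindex_cong[OF inj_on_subset[OF weyl_inj[OF w] subset_UNIV] refl refl])
  finally show ?thesis
    by (simp add: weyl_inner[OF w] upper_string_sum_def)
qed

lemma card_string_above_weyl:
  assumes "u \<in> W"
  shows "card {y\<in>orbit R z. string_above (u \<beta>) y (u x)} = card {y\<in>orbit R z. string_above \<beta> y x}"
proof -
  have "{y\<in>orbit R z. string_above (u \<beta>) y (u x)} = u ` {y\<in>orbit R z. string_above \<beta> y x}"
    using orbit_Collect_weyl[OF assms, of "\<lambda>y. string_above (u \<beta>) y (u x)" "\<lambda>y. string_above \<beta> y x"]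
      string_above_weyl[OF assms] by simp
  then show ?thesis
    using card_image[OF inj_on_subset[OF weyl_inj[OF assms] subset_UNIV]] by simp
qed

lemma card_weyl_maps_to:
  assumes "y \<in> orbit R z"
  shows "card {w\<in>W. w z = y} = card (stabilizer R z)"
proof -
  obtain w0 where w0: "w0 \<in> W" "y = w0 z"
    using assms by (auto simp: orbit_iff)
  have "bij_betw (\<lambda>s. w0 \<circ> s) (stabilizer R z) {w\<in>W. w z = y}"
  proof (rule bij_betw_byWitness[where f' = "\<lambda>w. inv w0 \<circ> w"])
    show "\<forall>s\<in>stabilizer R z. inv w0 \<circ> (w0 \<circ> s) = s" "\<forall>w\<in>{w\<in>W. w z = y}. w0 \<circ> (inv w0 \<circ> w) = w"
      using w0(1) by (simp_all add: fun_eq_iff)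
    show "(\<lambda>s. w0 \<circ> s) ` stabilizer R z \<subseteq> {w\<in>W. w z = y}"
      using w0 weyl_comp by (auto simp: stabilizer_def)
    show "(\<lambda>w. inv w0 \<circ> w) ` {w\<in>W. w z = y} \<subseteq> stabilizer R z"
      using w0 weyl_comp inv_in_weyl by (auto simp: stabilizer_def)
  qed
  then show ?thesis
    by (simp add: bij_betw_same_card)
qed

lemma card_orbit_stabilizer: "card (orbit R z) * card (stabilizer R z) = card W"
proof -
  have "card W = (\<Sum>y\<in>orbit R z. card {w\<in>W. w z = y})"
    using card_eq_sum sum.image_gen[OF finite_weyl, of "\<lambda>_. 1::nat" "\<lambda>w. w z"]
    by (simp add: orbit_def)
  also have "\<dots> = (\<Sum>y\<in>orbit R z. card (stabilizer R z))"
    using card_weyl_maps_to by simp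
  finally show ?thesis by simp
qed

lemma card_stabilizer_pos: "0 < card (stabilizer R z)"
proof -
  have "id \<in> stabilizer R z"
    using weyl.weyl_id by (simp add: stabilizer_def)
  moreover have "finite (stabilizer R z)"
    using finite_weyl by (simp add: stabilizer_def)
  ultimately show ?thesis
    by (auto simp: card_gt_0_iff)
qed

lemma card_orbit_pos: "0 < card (orbit R z)"
  using finite_orbit orbit_self by (auto simp: card_gt_0_iff)

lemma orbit_sum_eq: "orbit_sum R z y = (if y \<in> orbit R z then 1 else 0)"
  by (simp add: orbit_sum_def)

lemma orbit_sum_weyl: "w \<in> W \<Longrightarrow> orbit_sum R z (w y) = orbit_sum R z y"
  by (simp add: orbit_sum_def indicator_def orbit_closed_iff)

lemma mult_coth_dderiv_orbit_sum:
  "\<alpha> \<noteq> 0 \<Longrightarrow> mult_coth \<alpha> (dderiv \<alpha> (orbit_sum R z)) y =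
    orbit_sum R z y * (y \<bullet> \<alpha>) + 2 * upper_string_sum (orbit R z) \<alpha> y"
  by (simp add: orbit_sum_def mult_coth_dderiv_indicator finite_orbit)

lemma string_inner_sum_zero:
  assumes \<alpha>: "\<alpha> \<in> R" and z: "z \<in> weights R"
  shows "(\<Sum>x\<in>{x\<in>orbit R z. \<exists>k::int. x = y + of_int k *\<^sub>R \<alpha>}. x \<bullet> \<alpha>) = 0"
proof -
  define L where "L = {x\<in>orbit R z. \<exists>k::int. x = y + of_int k *\<^sub>R \<alpha>}"
  \<comment> \<open>the \<open>\<alpha>\<close>-string through \<open>y\<close> inside the orbit is stable under \<open>refl \<alpha>\<close>, which negates \<open>x \<bullet> \<alpha>\<close>\<close>
  have "refl \<alpha> x \<in> L" if x: "x \<in> L" for x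
  proof -
    obtain k :: int where k: "x = y + of_int k *\<^sub>R \<alpha>" "x \<in> orbit R z"
      using x unfolding L_def by blast
    have "x \<bullet> coroot \<alpha> \<in> \<int>"
      using orbit_weights[OF z k(2)] \<alpha> by (simp add: weights_def)
    then obtain c where "x \<bullet> coroot \<alpha> = of_int c"
      by (elim Ints_cases)
    then have "refl \<alpha> x = y + of_int (k - c) *\<^sub>R \<alpha>"
      using k(1) by (simp add: refl_def algebra_simps)
    moreover have "refl \<alpha> x \<in> orbit R z"
      using orbit_closed[OF k(2) refl_in_weyl[OF \<alpha>]] .
    ultimately show ?thesis
      unfolding L_def by blast
  qed
  then have "bij_betw (refl \<alpha>) L L"
    by (intro bij_betw_byWitness[where f' = "refl \<alpha>"]) auto
  then have "(\<Sum>x\<in>L. x \<bullet> \<alpha>) = (\<Sum>x\<in>L. refl \<alpha> x \<bullet> \<alpha>)"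
    using sum.reindex_bij_betw[of "refl \<alpha>" L L "\<lambda>x. x \<bullet> \<alpha>"] by simp
  also have "\<dots> = - (\<Sum>x\<in>L. x \<bullet> \<alpha>)"
    by (simp add: inner_refl_root sum_negf)
  finally show ?thesis
    by (simp add: L_def)
qed

lemma upper_string_sum_uminus:
  assumes \<alpha>: "\<alpha> \<in> R" and z: "z \<in> weights R"
  shows "upper_string_sum (orbit R z) (- \<alpha>) y =
    indicator (orbit R z) y * (y \<bullet> \<alpha>) + upper_string_sum (orbit R z) \<alpha> y"
proof -
  let ?O = "orbit R z"
  define L0 L1 L2 where "L0 = {y} \<inter> ?O" and "L1 = {x\<in>?O. string_above \<alpha> y x}"
    and "L2 = {x\<in>?O. string_above (- \<alpha>) y x}"
  have "{x\<in>?O. \<exists>k::int. x = y + of_int k *\<^sub>R \<alpha>} = L0 \<union> L1 \<union> L2"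
    unfolding L0_def L1_def L2_def string_int_cases by blast
  moreover have "L0 \<inter> L1 = {}" "(L0 \<union> L1) \<inter> L2 = {}"
    using string_above_self[of \<alpha>] string_above_self[of "- \<alpha>"]
      string_above_opposite[of \<alpha> y] root_nonzero[OF \<alpha>]
    by (auto simp: L0_def L1_def L2_def)
  moreover have "finite L0" "finite L1" "finite L2"
    using finite_orbit by (simp_all add: L0_def L1_def L2_def)
  ultimately have "0 = (\<Sum>x\<in>L0. x \<bullet> \<alpha>) + (\<Sum>x\<in>L1. x \<bullet> \<alpha>) + (\<Sum>x\<in>L2. x \<bullet> \<alpha>)"
    using string_inner_sum_zero[OF \<alpha> z, of y] by (simp add: sum.union_disjoint)
  moreover have "(\<Sum>x\<in>L0. x \<bullet> \<alpha>) = indicator ?O y * (y \<bullet> \<alpha>)"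
    by (cases "y \<in> ?O") (simp_all add: L0_def)
  ultimately show ?thesis
    by (simp add: upper_string_sum_def L1_def L2_def sum_negf)
qed

lemma mult_coth_dderiv_orbit_uminus:
  assumes "\<alpha> \<in> R" "z \<in> weights R"
  shows "mult_coth (- \<alpha>) (dderiv (- \<alpha>) (orbit_sum R z)) y = mult_coth \<alpha> (dderiv \<alpha> (orbit_sum R z)) y"
  using upper_string_sum_uminus[OF assms] root_nonzero[OF assms(1)]
  by (simp add: orbit_sum_def mult_coth_dderiv_indicator finite_orbit)

lemma mult_coth_dderiv_orbit_weyl:
  assumes "w \<in> W" "\<alpha> \<in> R"
  shows "mult_coth (w \<alpha>) (dderiv (w \<alpha>) (orbit_sum R z)) (w y) = mult_coth \<alpha> (dderiv \<alpha> (orbit_sum R z)) y"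
  using upper_string_sum_weyl[OF assms(1)] weyl_inner[OF assms(1)] orbit_closed_iff[OF assms(1)]
    root_nonzero[OF assms(2)] root_nonzero[OF weyl_root[OF assms]]
  by (simp add: orbit_sum_def mult_coth_dderiv_indicator finite_orbit indicator_def)

subsection \<open>Simple roots\<close>

definition simple_roots :: "'a set" where
  "simple_roots = {\<alpha>\<in>Rp. \<not> (\<exists>\<beta>\<in>Rp. \<exists>\<gamma>\<in>Rp. \<alpha> = \<beta> + \<gamma>)}"

definition simple_cone :: "'a set" where
  "simple_cone = {x. \<exists>c. (\<forall>\<gamma>. 0 \<le> c \<gamma>) \<and> x = (\<Sum>\<gamma>\<in>simple_roots. c \<gamma> *\<^sub>R \<gamma>)}"

lemma simple_roots_subset: "simple_roots \<subseteq> Rp"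
  by (auto simp: simple_roots_def)

lemma simple_root_in_roots: "\<alpha> \<in> simple_roots \<Longrightarrow> \<alpha> \<in> R"
  using simple_roots_subset pos_roots_subset by blast

lemma finite_simple_roots: "finite simple_roots"
  using finite_pos_roots simple_roots_subset finite_subset by blast

lemma simple_root_in_cone: "\<alpha> \<in> simple_roots \<Longrightarrow> \<alpha> \<in> simple_cone"
  unfolding simple_cone_def
  by (auto intro!: exI[of _ "\<lambda>\<gamma>. if \<gamma> = \<alpha> then 1 else 0"]
      simp: finite_simple_roots if_distrib[of "\<lambda>t. t *\<^sub>R _"] sum.delta cong: if_cong)

lemma simple_cone_add: "x \<in> simple_cone \<Longrightarrow> y \<in> simple_cone \<Longrightarrow> x + y \<in> simple_cone"
proof -
  assume "x \<in> simple_cone" "y \<in> simple_cone"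
  then obtain c d where "\<forall>\<gamma>. 0 \<le> c \<gamma>" "x = (\<Sum>\<gamma>\<in>simple_roots. c \<gamma> *\<^sub>R \<gamma>)"
    and "\<forall>\<gamma>. 0 \<le> d \<gamma>" "y = (\<Sum>\<gamma>\<in>simple_roots. d \<gamma> *\<^sub>R \<gamma>)"
    by (auto simp: simple_cone_def)
  then show ?thesis
    unfolding simple_cone_def
    by (intro CollectI exI[of _ "\<lambda>\<gamma>. c \<gamma> + d \<gamma>"]) (simp add: scaleR_add_left sum.distrib)
qed

lemma pos_root_in_simple_cone: "\<alpha> \<in> Rp \<Longrightarrow> \<alpha> \<in> simple_cone"
proof (induction "card {\<beta>\<in>Rp. \<beta> \<bullet> v < \<alpha> \<bullet> v}" arbitrary: \<alpha> rule: less_induct)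
  case less
  show ?case
  proof (cases "\<alpha> \<in> simple_roots")
    case False
    then obtain \<beta> \<gamma> where \<beta>: "\<beta> \<in> Rp" and \<gamma>: "\<gamma> \<in> Rp" and \<alpha>: "\<alpha> = \<beta> + \<gamma>"
      using less.prems by (auto simp: simple_roots_def)
    have lower: "\<eta> \<in> simple_cone" if "\<eta> \<in> Rp" "\<eta> \<bullet> v < \<alpha> \<bullet> v" for \<eta>
    proof (rule less.hyps[OF _ that(1)])
      have "{\<delta>\<in>Rp. \<delta> \<bullet> v < \<eta> \<bullet> v} \<subset> {\<delta>\<in>Rp. \<delta> \<bullet> v < \<alpha> \<bullet> v}"
        using that by force
      then show "card {\<delta>\<in>Rp. \<delta> \<bullet> v < \<eta> \<bullet> v} < card {\<delta>\<in>Rp. \<delta> \<bullet> v < \<alpha> \<bullet> v}"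
        using finite_pos_roots by (simp add: psubset_card_mono)
    qed
    have "\<beta> \<bullet> v < \<alpha> \<bullet> v" "\<gamma> \<bullet> v < \<alpha> \<bullet> v"
      using \<beta> \<gamma> by (auto simp: \<alpha> pos_roots_iff inner_add_left)
    then show ?thesis
      using lower \<beta> \<gamma> simple_cone_add by (simp add: \<alpha>)
  qed (rule simple_root_in_cone)
qed

lemma coroot_pair_eq_one:
  assumes "\<alpha> \<in> R" "\<beta> \<in> R" "\<alpha> \<noteq> \<beta>" "0 < \<alpha> \<bullet> \<beta>"
  shows "\<beta> \<bullet> coroot \<alpha> = 1 \<or> \<alpha> \<bullet> coroot \<beta> = 1"
proof -
  have aa: "0 < \<alpha> \<bullet> \<alpha>" and bb: "0 < \<beta> \<bullet> \<beta>"
    using assms root_nonzero by auto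
  obtain p q :: int where p: "\<beta> \<bullet> coroot \<alpha> = p" and q: "\<alpha> \<bullet> coroot \<beta> = q"
    using assms inner_coroot_Ints by (meson Ints_cases)
  have p_eq: "p = 2 * (\<alpha> \<bullet> \<beta>) / (\<alpha> \<bullet> \<alpha>)" and q_eq: "q = 2 * (\<alpha> \<bullet> \<beta>) / (\<beta> \<bullet> \<beta>)"
    using p q by (simp_all add: inner_coroot inner_commute)
  have "0 < real_of_int p" "0 < real_of_int q"
    using p_eq q_eq aa bb assms(4) by simp_all
  then have "0 < p" "0 < q" by simp_all
  \<comment> \<open>Cauchy-Schwarz bounds the product of the two Cartan integers by 4, with equality only
    for parallel roots\<close>
  have "real_of_int (p * q) = 4 * (\<alpha> \<bullet> \<beta>)\<^sup>2 / ((\<alpha> \<bullet> \<alpha>) * (\<beta> \<bullet> \<beta>))"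
    using aa bb by (simp add: p_eq q_eq power2_eq_square field_simps)
  also have "\<dots> \<le> 4"
    using Cauchy_Schwarz_ineq[of \<alpha> \<beta>] aa bb by (simp add: field_simps)
  finally have "p * q \<le> 4" by linarith
  moreover have "\<not> (p = 2 \<and> q = 2)"
  proof
    assume "p = 2 \<and> q = 2"
    then have "\<alpha> \<bullet> \<beta> = \<alpha> \<bullet> \<alpha>" "\<alpha> \<bullet> \<beta> = \<beta> \<bullet> \<beta>"
      using p_eq q_eq aa bb by (auto simp: field_simps)
    then have "(\<alpha> - \<beta>) \<bullet> (\<alpha> - \<beta>) = 0"
      by (simp add: inner_diff_left inner_diff_right inner_commute)
    then show False using assms(3) by simp
  qed
  moreover have "2 * q \<le> p * q" if "2 \<le> p" using that \<open>0 < q\<close> by simp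
  moreover have "p * 2 \<le> p * q" if "2 \<le> q" using that \<open>0 < p\<close> by simp
  ultimately have "p = 1 \<or> q = 1"
    using \<open>0 < p\<close> \<open>0 < q\<close> by linarith
  then show ?thesis using p q by auto
qed

lemma simple_roots_diff_not_root:
  assumes "\<alpha> \<in> simple_roots" "\<beta> \<in> simple_roots"
  shows "\<beta> - \<alpha> \<notin> R"
proof
  assume "\<beta> - \<alpha> \<in> R"
  then consider "\<beta> - \<alpha> \<in> Rp" | "\<alpha> - \<beta> \<in> Rp"
    using pos_or_neg_root by fastforce
  then show False
  proof cases
    case 1
    then have "\<beta> = \<alpha> + (\<beta> - \<alpha>)" "\<alpha> \<in> Rp" using assms simple_roots_subset by auto
    then show False using assms(2) 1 unfolding simple_roots_def by blast
  next
    case 2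
    then have "\<alpha> = \<beta> + (\<alpha> - \<beta>)" "\<beta> \<in> Rp" using assms simple_roots_subset by auto
    then show False using assms(1) 2 unfolding simple_roots_def by blast
  qed
qed

lemma simple_roots_obtuse:
  assumes "\<alpha> \<in> simple_roots" "\<beta> \<in> simple_roots" "\<alpha> \<noteq> \<beta>"
  shows "\<alpha> \<bullet> \<beta> \<le> 0"
proof (rule ccontr)
  assume "\<not> \<alpha> \<bullet> \<beta> \<le> 0"
  then have "\<beta> \<bullet> coroot \<alpha> = 1 \<or> \<alpha> \<bullet> coroot \<beta> = 1"
    using assms coroot_pair_eq_one simple_root_in_roots by simp
  then have "refl \<alpha> \<beta> = \<beta> - \<alpha> \<or> refl \<beta> \<alpha> = \<alpha> - \<beta>"
    by (auto simp: refl_def)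
  then show False
    using simple_roots_diff_not_root[OF assms(1,2)] simple_roots_diff_not_root[OF assms(2,1)]
      refl_in_roots simple_root_in_roots assms by metis
qed

lemma independent_simple_roots: "independent simple_roots"
  using simple_roots_obtuse simple_roots_subset finite_simple_roots
  by (intro independent_if_pairwise_obtuse[where v = v]) (auto simp: pos_roots_iff)

lemma simple_coeffs_unique:
  assumes "(\<Sum>\<gamma>\<in>simple_roots. a \<gamma> *\<^sub>R \<gamma>) = (\<Sum>\<gamma>\<in>simple_roots. b \<gamma> *\<^sub>R \<gamma>)" "\<gamma> \<in> simple_roots"
  shows "a \<gamma> = b \<gamma>"
proof -
  have "(\<Sum>\<gamma>\<in>simple_roots. (a \<gamma> - b \<gamma>) *\<^sub>R \<gamma>) = 0"
    using assms(1) by (simp add: scaleR_diff_left sum_subtractf)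
  then have "a \<gamma> - b \<gamma> = 0"
    by (rule independentD[OF independent_simple_roots finite_simple_roots subset_refl _ assms(2)])
  then show ?thesis by simp
qed

lemma refl_simple_root_pos:
  assumes \<alpha>: "\<alpha> \<in> simple_roots" and \<beta>: "\<beta> \<in> Rp" and not_mult: "\<beta> \<notin> range (\<lambda>c. c *\<^sub>R \<alpha>)"
  shows "refl \<alpha> \<beta> \<in> Rp"
proof (rule ccontr)
  assume "refl \<alpha> \<beta> \<notin> Rp"
  moreover have "refl \<alpha> \<beta> \<in> R"
    using refl_in_roots[OF simple_root_in_roots[OF \<alpha>]] \<beta> pos_roots_subset by blast
  ultimately have "- refl \<alpha> \<beta> \<in> Rp"
    using pos_or_neg_root by blast
  then obtain d where d: "\<forall>\<gamma>. 0 \<le> d \<gamma>" "- refl \<alpha> \<beta> = (\<Sum>\<gamma>\<in>simple_roots. d \<gamma> *\<^sub>R \<gamma>)"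
    using pos_root_in_simple_cone by (auto simp: simple_cone_def)
  obtain b where b: "\<forall>\<gamma>. 0 \<le> b \<gamma>" "\<beta> = (\<Sum>\<gamma>\<in>simple_roots. b \<gamma> *\<^sub>R \<gamma>)"
    using pos_root_in_simple_cone[OF \<beta>] by (auto simp: simple_cone_def)
  define t where "t = \<beta> \<bullet> coroot \<alpha>"
  \<comment> \<open>\<open>\<beta> - refl \<alpha> \<beta> = t \<alpha>\<close> has nonnegative coordinates that vanish off \<open>\<alpha>\<close>, hence so do those of \<open>\<beta>\<close>\<close>
  have "(\<Sum>\<gamma>\<in>simple_roots. (b \<gamma> + d \<gamma>) *\<^sub>R \<gamma>) = \<beta> + - refl \<alpha> \<beta>"
    unfolding scaleR_add_left sum.distrib b(2)[symmetric] d(2)[symmetric] ..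
  also have "\<dots> = t *\<^sub>R \<alpha>"
    by (simp add: refl_def t_def)
  also have "\<dots> = (\<Sum>\<gamma>\<in>simple_roots. (if \<gamma> = \<alpha> then t else 0) *\<^sub>R \<gamma>)"
    using \<alpha> finite_simple_roots by (simp add: if_distrib[of "\<lambda>s. s *\<^sub>R _"] sum.delta cong: if_cong)
  finally have coords: "(\<Sum>\<gamma>\<in>simple_roots. (b \<gamma> + d \<gamma>) *\<^sub>R \<gamma>) =
      (\<Sum>\<gamma>\<in>simple_roots. (if \<gamma> = \<alpha> then t else 0) *\<^sub>R \<gamma>)" .
  have "b \<gamma> + d \<gamma> = 0" if "\<gamma> \<in> simple_roots" "\<gamma> \<noteq> \<alpha>" for \<gamma>
    using simple_coeffs_unique[OF coords that(1)] that(2) by simp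
  then have "b \<gamma> = 0" if "\<gamma> \<in> simple_roots" "\<gamma> \<noteq> \<alpha>" for \<gamma>
    using that b(1) d(1) by (meson add_nonneg_eq_0_iff)
  then have "\<beta> = (\<Sum>\<gamma>\<in>simple_roots. (if \<gamma> = \<alpha> then b \<alpha> else 0) *\<^sub>R \<gamma>)"
    unfolding b(2) by (intro sum.cong) auto
  also have "\<dots> = b \<alpha> *\<^sub>R \<alpha>"
    using \<alpha> finite_simple_roots by (simp add: if_distrib[of "\<lambda>s. s *\<^sub>R _"] sum.delta cong: if_cong)
  finally show False
    using not_mult by (metis rangeI)
qed

lemma exists_simple_root_acute:
  assumes "\<gamma> \<in> Rp" shows "\<exists>\<delta>\<in>simple_roots. 0 < \<delta> \<bullet> \<gamma>"
proof (rule ccontr)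
  assume none: "\<not> ?thesis"
  obtain c where c: "\<forall>\<delta>. 0 \<le> c \<delta>" "\<gamma> = (\<Sum>\<delta>\<in>simple_roots. c \<delta> *\<^sub>R \<delta>)"
    using pos_root_in_simple_cone[OF assms] by (auto simp: simple_cone_def)
  have "\<gamma> \<bullet> \<gamma> = (\<Sum>\<delta>\<in>simple_roots. c \<delta> * (\<delta> \<bullet> \<gamma>))"
    by (subst (1) c(2)) (simp add: inner_sum_left)
  also have "\<dots> \<le> 0"
    using none c(1) by (intro sum_nonpos mult_nonneg_nonpos) auto
  finally show False
    using pos_root_nonzero[OF assms] by (meson inner_gt_zero_iff not_le)
qed

lemma pos_root_conj_simple:
  assumes "\<beta> \<in> Rp"
  obtains l \<alpha> c where "set l \<subseteq> simple_roots" "\<alpha> \<in> simple_roots" "refl_word l \<beta> = c *\<^sub>R \<alpha>"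
proof -
  define A where "A = {\<gamma>\<in>Rp. \<exists>l. set l \<subseteq> simple_roots \<and> \<gamma> = refl_word l \<beta>}"
  define \<gamma> where "\<gamma> = arg_min_on (\<lambda>\<gamma>. \<gamma> \<bullet> v) A"
  have "\<beta> \<in> A" using assms by (auto simp: A_def intro!: exI[of _ "[]"])
  have "finite A" using finite_pos_roots by (auto simp: A_def)
  have "\<gamma> \<in> A"
    unfolding \<gamma>_def using \<open>finite A\<close> \<open>\<beta> \<in> A\<close> by (metis arg_min_if_finite(1) empty_iff)
  have min: "\<gamma> \<bullet> v \<le> \<gamma>' \<bullet> v" if "\<gamma>' \<in> A" for \<gamma>'
    unfolding \<gamma>_def using arg_min_least[OF \<open>finite A\<close> _ that, of "\<lambda>\<gamma>. \<gamma> \<bullet> v"] that by auto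
  from \<open>\<gamma> \<in> A\<close> obtain l where l: "set l \<subseteq> simple_roots" "\<gamma> = refl_word l \<beta>" and "\<gamma> \<in> Rp"
    by (auto simp: A_def)
  \<comment> \<open>a root of minimal height in \<open>A\<close> is a multiple of a simple root, since reflecting
    in an acute simple root would lower its height without leaving \<open>A\<close>\<close>
  have "\<exists>\<alpha>\<in>simple_roots. \<gamma> \<in> range (\<lambda>c. c *\<^sub>R \<alpha>)"
  proof (rule ccontr)
    assume not_mult: "\<not> ?thesis"
    obtain \<delta> where \<delta>: "\<delta> \<in> simple_roots" "0 < \<delta> \<bullet> \<gamma>"
      using exists_simple_root_acute[OF \<open>\<gamma> \<in> Rp\<close>] by blast
    have "refl \<delta> \<gamma> \<in> Rp"
      using not_mult \<delta>(1) by (intro refl_simple_root_pos[OF \<delta>(1) \<open>\<gamma> \<in> Rp\<close>]) blast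
    moreover have "refl \<delta> \<gamma> = refl_word (\<delta> # l) \<beta>" "set (\<delta> # l) \<subseteq> simple_roots"
      using l \<delta>(1) by simp_all
    ultimately have "refl \<delta> \<gamma> \<in> A"
      unfolding A_def by blast
    moreover have "refl \<delta> \<gamma> \<bullet> v < \<gamma> \<bullet> v"
      using \<delta> simple_roots_subset by (intro refl_lowers_height) (auto simp: pos_roots_iff)
    ultimately show False
      using min by (meson not_le)
  qed
  then show ?thesis
    using that l by (metis rangeE)
qed

lemma refl_eq_refl_word:
  assumes "\<beta> \<in> R"
  obtains l where "set l \<subseteq> simple_roots" "refl \<beta> = refl_word l"
proof -
  have "\<exists>l. set l \<subseteq> simple_roots \<and> refl \<beta> = refl_word l" if \<beta>: "\<beta> \<in> Rp" for \<beta>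
  proof -
    obtain l \<alpha> c where l: "set l \<subseteq> simple_roots" "\<alpha> \<in> simple_roots" "refl_word l \<beta> = c *\<^sub>R \<alpha>"
      using pos_root_conj_simple[OF \<beta>] .
    have "refl_word l \<beta> \<noteq> 0"
      using pos_root_nonzero[OF \<beta>] orthogonal_transformation_refl_word
      by (metis orthogonal_transformation_norm norm_eq_zero)
    then have "c \<noteq> 0" using l(3) by auto
    have "refl \<beta> x = refl_word (rev l @ \<alpha> # l) x" for x
    proof -
      have "refl \<beta> x = refl (refl_word (rev l) (c *\<^sub>R \<alpha>)) (refl_word (rev l) (refl_word l x))"
        using refl_word_rev[of l \<beta>] by (simp add: l(3))
      also have "\<dots> = refl_word (rev l) (refl (c *\<^sub>R \<alpha>) (refl_word l x))"
        by (rule orthogonal_transformation_refl_conj[OF orthogonal_transformation_refl_word, symmetric])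
      also have "\<dots> = refl_word (rev l @ \<alpha> # l) x"
        using \<open>c \<noteq> 0\<close> by (simp add: refl_scaleR_root refl_word_append)
      finally show ?thesis .
    qed
    moreover have "set (rev l @ \<alpha> # l) \<subseteq> simple_roots"
      using l by auto
    ultimately show ?thesis by blast
  qed
  moreover have "refl (- \<beta>) = refl \<beta>"
    using refl_scaleR_root[of "-1" \<beta>] by simp
  ultimately show ?thesis
    using that assms pos_or_neg_root by metis
qed

lemma weyl_eq_refl_word:
  assumes "w \<in> W"
  obtains l where "set l \<subseteq> simple_roots" "w = refl_word l"
proof -
  from assms have "\<exists>l. set l \<subseteq> simple_roots \<and> w = refl_word l"
  proof (induction rule: weyl.induct)
    case weyl_id
    show ?case by (auto intro!: exI[of _ "[]"])
  next
    case (weyl_step w \<alpha>)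
    then obtain l l' where "set l \<subseteq> simple_roots" "w = refl_word l"
      and "set l' \<subseteq> simple_roots" "refl \<alpha> = refl_word l'"
      using refl_eq_refl_word by metis
    then show ?case
      by (intro exI[of _ "l' @ l"]) (simp add: refl_word_append)
  qed
  then show ?thesis using that by blast
qed

subsection \<open>The fundamental chamber\<close>

definition chamber :: "'a set" where
  "chamber = {x. \<forall>\<alpha>\<in>Rp. 0 \<le> x \<bullet> \<alpha>}"

lemma refl_word_deletion:
  assumes l: "set l \<subseteq> simple_roots" and a: "a \<in> simple_roots" and neg: "refl_word l a \<notin> Rp"
  obtains l' where "set l' \<subseteq> simple_roots" "length l' < length l"
    "refl_word (l @ [a]) = refl_word l'"
proof -
  define \<gamma> where "\<gamma> j = refl_word (drop j l) a" for j
  have "\<gamma> (length l) \<in> Rp" "\<gamma> 0 \<notin> Rp"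
    using a neg simple_roots_subset by (auto simp: \<gamma>_def)
  then obtain j where j: "j < length l" "\<gamma> j \<notin> Rp" "\<gamma> (Suc j) \<in> Rp"
    using ex_Suc_switch[of "\<lambda>j. \<gamma> j \<in> Rp"] by blast
  define b u where "b = l ! j" and "u = refl_word (drop (Suc j) l)"
  have l_split: "l = take j l @ b # drop (Suc j) l"
    using j(1) by (simp add: b_def id_take_nth_drop)
  have b: "b \<in> simple_roots"
    using j(1) l by (auto simp: b_def)
  have "\<gamma> j = refl b (u a)"
    using j(1) by (simp add: \<gamma>_def u_def b_def Cons_nth_drop_Suc[symmetric])
  then obtain c where c: "u a = c *\<^sub>R b"
    using refl_simple_root_pos[OF b] j(2,3) by (auto simp: \<gamma>_def u_def)
  have "u a \<noteq> 0"
    using j(3) pos_root_nonzero by (simp add: \<gamma>_def u_def)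
  then have "c \<noteq> 0"
    using c by auto
  \<comment> \<open>the letter \<open>b\<close> and the final \<open>a\<close> cancel: \<open>refl b \<circ> u = u \<circ> refl a\<close>\<close>
  have "refl b (u x) = u (refl a x)" for x
    using orthogonal_transformation_refl_conj[OF orthogonal_transformation_refl_word, of _ a x]
      refl_scaleR_root[OF \<open>c \<noteq> 0\<close>, of b] c by (simp add: u_def)
  then have "refl_word (l @ [a]) = refl_word (take j l @ drop (Suc j) l)"
    by (subst l_split) (simp add: refl_word_append fun_eq_iff u_def)
  moreover have "length (take j l @ drop (Suc j) l) < length l"
    using j(1) by simp
  moreover have "set (take j l @ drop (Suc j) l) \<subseteq> simple_roots"
    using l by (auto dest: in_set_takeD in_set_dropD)
  ultimately show ?thesis using that by blast
qed

lemma chamber_refl_word_fixed: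
  "set l \<subseteq> simple_roots \<Longrightarrow> x \<in> chamber \<Longrightarrow> refl_word l x \<in> chamber \<Longrightarrow> refl_word l x = x"
proof (induction "length l" arbitrary: l rule: less_induct)
  case less
  show ?case
  proof (cases l rule: rev_cases)
    case (snoc l' a)
    have a: "a \<in> simple_roots" and l': "set l' \<subseteq> simple_roots"
      using less.prems(1) snoc by auto
    have word: "refl_word l = refl_word l' \<circ> refl a"
      by (simp add: snoc refl_word_append)
    show ?thesis
    proof (cases "refl_word l' a \<in> Rp")
      case True
      \<comment> \<open>both \<open>x\<close> and its image pair nonnegatively with a root that the word sends to its negative\<close>
      have "refl_word l x \<bullet> refl_word l' a = - (x \<bullet> a)"
        using orthogonal_transformation_refl_word[of l']
        by (simp add: word orthogonal_transformation_def inner_refl_root)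
      moreover have "0 \<le> x \<bullet> a" "0 \<le> refl_word l x \<bullet> refl_word l' a"
        using less.prems(2,3) a True simple_roots_subset by (auto simp: chamber_def)
      ultimately have "refl_word l x = refl_word l' x"
        by (simp add: word refl_eq_self)
      then show ?thesis
        using less.hyps[of l'] less.prems l' snoc by simp
    next
      case False
      obtain l2 where l2: "set l2 \<subseteq> simple_roots" "length l2 < length l'"
        and "refl_word l = refl_word l2"
        using refl_word_deletion[OF l' a False] snoc by metis
      moreover have "length l2 < length l"
        using l2(2) snoc by simp
      ultimately show ?thesis
        using less.hyps[of l2] less.prems by simp
    qed
  qed simp
qed

lemma chamber_orbit_unique: "w \<in> W \<Longrightarrow> x \<in> chamber \<Longrightarrow> w x \<in> chamber \<Longrightarrow> w x = x"
  using weyl_eq_refl_word chamber_refl_word_fixed by metis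

subsection \<open>Dominant weights\<close>

lemma dominant_iff: "la \<in> dominant R v \<longleftrightarrow> la \<in> weights R \<and> la \<in> chamber"
  using inner_coroot_nonneg_iff pos_root_nonzero
  by (auto simp: dominant_def chamber_def inner_commute)

lemma dominant_orbit_unique:
  assumes "la \<in> dominant R v" "mu \<in> dominant R v" "mu \<in> orbit R la"
  shows "mu = la"
  using assms chamber_orbit_unique by (auto simp: dominant_iff orbit_iff)

lemma zero_in_pos_cone: "0 \<in> pos_cone R v"
  by (auto simp: pos_cone_def intro!: exI[of _ "\<lambda>_. 0"])

lemma pos_cone_add: "x \<in> pos_cone R v \<Longrightarrow> y \<in> pos_cone R v \<Longrightarrow> x + y \<in> pos_cone R v"
proof -
  assume "x \<in> pos_cone R v" "y \<in> pos_cone R v"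
  then obtain c d :: "'a \<Rightarrow> nat" where "x = (\<Sum>\<alpha>\<in>Rp. real (c \<alpha>) *\<^sub>R \<alpha>)" "y = (\<Sum>\<alpha>\<in>Rp. real (d \<alpha>) *\<^sub>R \<alpha>)"
    by (auto simp: pos_cone_def)
  then show ?thesis
    unfolding pos_cone_def
    by (intro CollectI exI[of _ "\<lambda>\<alpha>. c \<alpha> + d \<alpha>"]) (simp add: scaleR_add_left sum.distrib)
qed

lemma pos_root_in_pos_cone: "\<alpha> \<in> Rp \<Longrightarrow> real k *\<^sub>R \<alpha> \<in> pos_cone R v"
  unfolding pos_cone_def
  by (intro CollectI exI[of _ "\<lambda>\<beta>. if \<beta> = \<alpha> then k else 0"])
    (simp add: finite_pos_roots if_distrib[of "\<lambda>t. real t *\<^sub>R _"] sum.delta cong: if_cong)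

lemma pos_cone_inner_v: "x \<in> pos_cone R v \<Longrightarrow> 0 \<le> x \<bullet> v"
  by (auto simp: pos_cone_def inner_sum_left pos_roots_iff intro!: sum_nonneg)

lemma neg_pos_root_notin_pos_cone: "\<alpha> \<in> Rp \<Longrightarrow> 0 < k \<Longrightarrow> - (real k *\<^sub>R \<alpha>) \<notin> pos_cone R v"
proof
  assume "\<alpha> \<in> Rp" "0 < k" "- (real k *\<^sub>R \<alpha>) \<in> pos_cone R v"
  then have "0 < real k * (\<alpha> \<bullet> v)" "0 \<le> - (real k * (\<alpha> \<bullet> v))"
    using pos_cone_inner_v by (fastforce simp: pos_roots_iff)+
  then show False by simp
qed

lemma weights_diff_root:
  assumes "x \<in> weights R" "\<alpha> \<in> R"
  shows "x - real k *\<^sub>R \<alpha> \<in> weights R"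
  unfolding weights_def mem_Collect_eq
proof
  fix \<beta> assume "\<beta> \<in> R"
  then have "x \<bullet> coroot \<beta> \<in> \<int>" "\<alpha> \<bullet> coroot \<beta> \<in> \<int>"
    using assms inner_coroot_Ints by (auto simp: weights_def)
  then show "(x - real k *\<^sub>R \<alpha>) \<bullet> coroot \<beta> \<in> \<int>"
    by (simp add: inner_diff_left)
qed

lemma raise_out_of_chamber:
  assumes "y \<in> weights R" "y \<notin> chamber"
  obtains \<alpha> n where "\<alpha> \<in> Rp" "0 < n" "refl \<alpha> y = y + real n *\<^sub>R \<alpha>" "y \<bullet> v < refl \<alpha> y \<bullet> v"
proof -
  obtain \<alpha> where \<alpha>: "\<alpha> \<in> Rp" "y \<bullet> \<alpha> < 0"
    using assms(2) by (auto simp: chamber_def not_le)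
  then have "y \<bullet> coroot \<alpha> < 0"
    using inner_coroot_nonneg_iff[OF pos_root_nonzero] by (meson not_le)
  moreover have "y \<bullet> coroot \<alpha> \<in> \<int>"
    using assms(1) \<alpha>(1) pos_roots_subset by (auto simp: weights_def)
  then obtain k where "y \<bullet> coroot \<alpha> = of_int k"
    by (elim Ints_cases)
  ultimately have "0 < nat (- k)" "refl \<alpha> y = y + real (nat (- k)) *\<^sub>R \<alpha>"
    by (simp_all add: refl_def)
  then obtain n :: nat where n: "0 < n" "refl \<alpha> y = y + real n *\<^sub>R \<alpha>"
    by blast
  have "0 < real n * (\<alpha> \<bullet> v)"
    using n(1) \<alpha>(1) by (simp add: pos_roots_iff)
  then have "y \<bullet> v < refl \<alpha> y \<bullet> v"
    by (simp add: n(2) inner_add_left)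
  then show ?thesis
    using that \<alpha>(1) n by blast
qed

lemma exists_dominant_in_orbit:
  assumes "x \<in> weights R"
  obtains mu where "mu \<in> dominant R v" "x \<in> orbit R mu"
proof -
  \<comment> \<open>a point of maximal height in the orbit is dominant\<close>
  obtain y where y: "y \<in> orbit R x" and max: "\<And>z. z \<in> orbit R x \<Longrightarrow> z \<bullet> v \<le> y \<bullet> v"
    using finite_ex_arg_max[OF finite_orbit, of x "\<lambda>z. z \<bullet> v"] orbit_self by blast
  have "y \<in> weights R"
    using orbit_weights[OF assms y] .
  moreover have "y \<in> chamber"
  proof (rule ccontr)
    assume "y \<notin> chamber"
    then obtain \<alpha> where "\<alpha> \<in> Rp" "y \<bullet> v < refl \<alpha> y \<bullet> v"
      using raise_out_of_chamber[OF \<open>y \<in> weights R\<close>] by metis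
    then show False
      using max[OF orbit_closed[OF y refl_in_weyl]] pos_roots_subset by fastforce
  qed
  ultimately show ?thesis
    using that orbit_sym[OF y] by (simp add: dominant_iff)
qed

lemma dominant_minus_orbit_in_pos_cone:
  assumes la: "la \<in> dominant R v" and x: "x \<in> orbit R la"
  shows "la - x \<in> pos_cone R v"
proof -
  define A where "A = {y \<in> orbit R la. y - x \<in> pos_cone R v}"
  have "x \<in> A" "finite A"
    using x zero_in_pos_cone finite_orbit by (auto simp: A_def)
  then obtain y where y: "y \<in> A" and max: "\<And>z. z \<in> A \<Longrightarrow> z \<bullet> v \<le> y \<bullet> v"
    using finite_ex_arg_max[of A "\<lambda>z. z \<bullet> v"] by blast
  have y_orbit: "y \<in> orbit R la" and y_cone: "y - x \<in> pos_cone R v"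
    using y by (auto simp: A_def)
  have "y \<in> weights R"
    using orbit_weights y_orbit la by (auto simp: dominant_iff)
  moreover have "y \<in> chamber"
  proof (rule ccontr)
    assume "y \<notin> chamber"
    then obtain \<alpha> n where \<alpha>: "\<alpha> \<in> Rp" "refl \<alpha> y = y + real n *\<^sub>R \<alpha>" "y \<bullet> v < refl \<alpha> y \<bullet> v"
      using raise_out_of_chamber[OF \<open>y \<in> weights R\<close>] by metis
    have "(y - x) + real n *\<^sub>R \<alpha> \<in> pos_cone R v"
      by (rule pos_cone_add[OF y_cone pos_root_in_pos_cone[OF \<alpha>(1)]])
    then have "refl \<alpha> y - x \<in> pos_cone R v"
      by (simp add: \<alpha>(2) algebra_simps)
    moreover have "refl \<alpha> y \<in> orbit R la"
      using orbit_closed[OF y_orbit refl_in_weyl] \<alpha>(1) pos_roots_subset by blast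
    ultimately have "refl \<alpha> y \<in> A"
      by (simp add: A_def)
    then show False
      using max \<alpha>(3) by fastforce
  qed
  ultimately have "y = la"
    using dominant_orbit_unique[OF la _ y_orbit] by (simp add: dominant_iff)
  then show ?thesis
    using y_cone by simp
qed

lemma chamber_norm_le:
  assumes "la \<in> chamber" "mu \<in> chamber" "la - mu \<in> pos_cone R v"
  shows "norm mu \<le> norm la"
proof -
  obtain c :: "'a \<Rightarrow> nat" where c: "la - mu = (\<Sum>\<alpha>\<in>Rp. real (c \<alpha>) *\<^sub>R \<alpha>)"
    using assms(3) by (auto simp: pos_cone_def)
  have "0 \<le> (\<Sum>\<alpha>\<in>Rp. real (c \<alpha>) * (\<alpha> \<bullet> (la + mu)))"
    using assms(1,2) by (intro sum_nonneg) (auto simp: chamber_def inner_commute inner_add_right)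
  also have "\<dots> = (la - mu) \<bullet> (la + mu)"
    by (simp add: c inner_sum_left)
  also have "\<dots> = la \<bullet> la - mu \<bullet> mu"
    by (simp add: inner_diff_left inner_add_right inner_commute[of mu la])
  finally show ?thesis
    by (simp add: norm_eq_sqrt_inner)
qed

lemma pos_cone_coeff_le:
  assumes "x = (\<Sum>\<alpha>\<in>Rp. real (c \<alpha>) *\<^sub>R \<alpha>)" "\<alpha> \<in> Rp"
  shows "real (c \<alpha>) \<le> (x \<bullet> v) / (\<alpha> \<bullet> v)"
proof -
  have "real (c \<alpha>) * (\<alpha> \<bullet> v) \<le> (\<Sum>\<beta>\<in>Rp. real (c \<beta>) * (\<beta> \<bullet> v))"
    using assms(2) finite_pos_roots by (intro member_le_sum) (auto simp: pos_roots_iff)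
  also have "\<dots> = x \<bullet> v"
    by (simp add: assms(1) inner_sum_left)
  finally show ?thesis
    using assms(2) by (simp add: pos_roots_iff field_simps)
qed

lemma dominant_below_height_le:
  assumes "la \<in> chamber" "mu \<in> chamber" "la - mu \<in> pos_cone R v"
  shows "(la - mu) \<bullet> v \<le> 2 * norm la * norm v"
proof -
  have "(la - mu) \<bullet> v \<le> (norm la + norm mu) * norm v"
    by (metis mult_right_mono norm_cauchy_schwarz norm_ge_zero norm_triangle_ineq4 order_trans)
  also have "\<dots> \<le> 2 * norm la * norm v"
    using chamber_norm_le[OF assms] by (intro mult_right_mono) auto
  finally show ?thesis .
qed

lemma finite_dominant_below:
  assumes la: "la \<in> dominant R v"
  shows "finite {mu \<in> dominant R v. dom_less R v mu la}"
proof -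
  define B where "B \<alpha> = nat \<lceil>2 * norm la * norm v / (\<alpha> \<bullet> v)\<rceil>" for \<alpha>
  define f where "f c = la - (\<Sum>\<alpha>\<in>Rp. real (c \<alpha>) *\<^sub>R \<alpha>)" for c :: "'a \<Rightarrow> nat"
  have "{mu \<in> dominant R v. dom_less R v mu la} \<subseteq> f ` (PiE Rp (\<lambda>\<alpha>. {0..B \<alpha>}))"
  proof
    fix mu assume "mu \<in> {mu \<in> dominant R v. dom_less R v mu la}"
    then have mu: "mu \<in> dominant R v" "la - mu \<in> pos_cone R v"
      by (auto simp: dom_less_def dom_le_def)
    obtain c :: "'a \<Rightarrow> nat" where c: "la - mu = (\<Sum>\<alpha>\<in>Rp. real (c \<alpha>) *\<^sub>R \<alpha>)"
      using mu(2) by (auto simp: pos_cone_def)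
    have "c \<alpha> \<le> B \<alpha>" if "\<alpha> \<in> Rp" for \<alpha>
    proof -
      have "(la - mu) \<bullet> v \<le> 2 * norm la * norm v"
        using dominant_below_height_le la mu by (simp add: dominant_iff)
      then have "(la - mu) \<bullet> v / (\<alpha> \<bullet> v) \<le> 2 * norm la * norm v / (\<alpha> \<bullet> v)"
        using that by (intro divide_right_mono) (auto simp: pos_roots_iff)
      then have "real (c \<alpha>) \<le> 2 * norm la * norm v / (\<alpha> \<bullet> v)"
        using pos_cone_coeff_le[OF c that] by linarith
      then show ?thesis
        unfolding B_def by linarith
    qed
    then have "restrict c Rp \<in> PiE Rp (\<lambda>\<alpha>. {0..B \<alpha>})"
      by auto
    moreover have "mu = f (restrict c Rp)"
      using c by (simp add: f_def algebra_simps cong: sum.cong)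
    ultimately show "mu \<in> f ` (PiE Rp (\<lambda>\<alpha>. {0..B \<alpha>}))"
      by blast
  qed
  moreover have "finite (f ` (PiE Rp (\<lambda>\<alpha>. {0..B \<alpha>})))"
    using finite_pos_roots by (intro finite_imageI finite_PiE) auto
  ultimately show ?thesis
    using finite_subset by blast
qed

end

section \<open>The expansion of the operator on orbit sums\<close>

locale hypergeometric = positive_system +
  fixes g :: "'a \<Rightarrow> real" and la :: 'a
  assumes g_weyl: "\<And>w \<alpha>. w \<in> weyl R \<Longrightarrow> \<alpha> \<in> R \<Longrightarrow> g (w \<alpha>) = g \<alpha>"
    and la_dominant: "la \<in> dominant R v"
begin

abbreviation "Ola \<equiv> orbit R la"

abbreviation "Dm \<equiv> hyp_op R v g (orbit_sum R la)"

lemma la_weights: "la \<in> weights R"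
  using la_dominant by (simp add: dominant_iff)

lemma g_uminus: "\<alpha> \<in> R \<Longrightarrow> g (- \<alpha>) = g \<alpha>"
  using g_weyl[OF refl_in_weyl, of \<alpha> \<alpha>] by (simp add: refl_root)

lemma Dm_eq: "Dm y = (norm y)\<^sup>2 * orbit_sum R la y +
    (\<Sum>\<alpha>\<in>Rp. g \<alpha> * mult_coth \<alpha> (dderiv \<alpha> (orbit_sum R la)) y)"
  by (simp add: hyp_op_def laplacian_eq)

lemma Dm_eq_roots: "Dm y = (norm y)\<^sup>2 * orbit_sum R la y +
    (\<Sum>\<alpha>\<in>R. g \<alpha> * mult_coth \<alpha> (dderiv \<alpha> (orbit_sum R la)) y) / 2"
  using sum_roots_even[of "\<lambda>\<alpha>. g \<alpha> * mult_coth \<alpha> (dderiv \<alpha> (orbit_sum R la)) y"]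
    g_uminus mult_coth_dderiv_orbit_uminus[OF _ la_weights]
  by (simp add: Dm_eq)

lemma Dm_weyl:
  assumes w: "w \<in> W"
  shows "Dm (w y) = Dm y"
proof -
  let ?c = "\<lambda>\<alpha> y. g \<alpha> * mult_coth \<alpha> (dderiv \<alpha> (orbit_sum R la)) y"
  have "(\<Sum>\<alpha>\<in>R. ?c \<alpha> (w y)) = (\<Sum>\<alpha>\<in>R. ?c (w \<alpha>) (w y))"
    using sum_roots_weyl[OF w, of "\<lambda>\<alpha>. ?c \<alpha> (w y)"] by simp
  also have "\<dots> = (\<Sum>\<alpha>\<in>R. ?c \<alpha> y)"
    using g_weyl[OF w] mult_coth_dderiv_orbit_weyl[OF w] by simp
  finally show ?thesis
    by (simp add: Dm_eq_roots weyl_norm[OF w] orbit_sum_weyl[OF w])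
qed

lemma Dm_off_orbit: "y \<notin> Ola \<Longrightarrow> Dm y = (\<Sum>\<alpha>\<in>R. g \<alpha> * upper_string_sum Ola \<alpha> y)"
  using root_nonzero
  by (simp add: Dm_eq_roots orbit_sum_eq mult_coth_dderiv_orbit_sum sum_distrib_left mult_ac
      cong: sum.cong)

lemma Dm_off_orbit_pos: "y \<notin> Ola \<Longrightarrow> Dm y = (\<Sum>\<alpha>\<in>Rp. g \<alpha> * (2 * upper_string_sum Ola \<alpha> y))"
  using pos_root_nonzero
  by (simp add: Dm_eq orbit_sum_eq mult_coth_dderiv_orbit_sum cong: sum.cong)

lemma string_above_orbit_below:
  assumes "x \<in> Ola" "string_above \<alpha> y x" "\<alpha> \<in> Rp"
  shows "dom_less R v y la"
proof -
  obtain k :: nat where k: "x = y + real (Suc k) *\<^sub>R \<alpha>"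
    using assms(2) by (auto simp: string_above_def)
  have "la - x \<in> pos_cone R v"
    using dominant_minus_orbit_in_pos_cone[OF la_dominant assms(1)] .
  then have "(la - x) + real (Suc k) *\<^sub>R \<alpha> \<in> pos_cone R v"
    by (rule pos_cone_add[OF _ pos_root_in_pos_cone[OF assms(3)]])
  moreover have "la - y = (la - x) + real (Suc k) *\<^sub>R \<alpha>"
    by (simp add: k algebra_simps)
  ultimately have "la - y \<in> pos_cone R v"
    by (simp only:)
  moreover have "y \<noteq> la"
    using \<open>la - x \<in> pos_cone R v\<close> neg_pos_root_notin_pos_cone[OF assms(3), of "Suc k"] k by auto
  ultimately show ?thesis
    by (simp add: dom_less_def dom_le_def)
qed

lemma Dm_la: "Dm la = eigval R v g la"
proof -
  have "upper_string_sum Ola \<alpha> la = 0" if "\<alpha> \<in> Rp" for \<alpha>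
    using string_above_orbit_below[OF _ _ that] unfolding upper_string_sum_def
    by (intro sum.neutral) (auto simp: dom_less_def)
  then have "Dm la = la \<bullet> la + (\<Sum>\<alpha>\<in>Rp. g \<alpha> * (la \<bullet> \<alpha>))"
    using orbit_self pos_root_nonzero
    by (simp add: Dm_eq orbit_sum_eq mult_coth_dderiv_orbit_sum power2_norm_eq_inner)
  also have "\<dots> = eigval R v g la"
    by (simp add: eigval_def rho_def inner_add_left inner_add_right inner_sum_right inner_commute)
  finally show ?thesis .
qed

definition weighted_string_count :: "'a \<Rightarrow> 'a \<Rightarrow> real" where
  "weighted_string_count nu x =
    (\<Sum>\<alpha>\<in>R. g \<alpha> * (x \<bullet> \<alpha>) * real (card {y\<in>orbit R nu. string_above \<alpha> y x}))"

lemma sum_Dm_orbit: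
  assumes nu: "nu \<notin> Ola"
  shows "(\<Sum>y\<in>orbit R nu. Dm y) = (\<Sum>x\<in>Ola. weighted_string_count nu x)"
proof -
  let ?t = "\<lambda>\<alpha> y x. if string_above \<alpha> y x then g \<alpha> * (x \<bullet> \<alpha>) else 0"
  have "Dm y = (\<Sum>\<alpha>\<in>R. \<Sum>x\<in>Ola. ?t \<alpha> y x)" if "y \<in> orbit R nu" for y
  proof -
    have "y \<notin> Ola"
      using nu that orbit_sym orbit_trans by blast
    then show ?thesis
      by (simp add: Dm_off_orbit upper_string_sum_def sum.inter_filter[OF finite_orbit]
          sum_distrib_left if_distrib cong: if_cong)
  qed
  then have "(\<Sum>y\<in>orbit R nu. Dm y) = (\<Sum>y\<in>orbit R nu. \<Sum>\<alpha>\<in>R. \<Sum>x\<in>Ola. ?t \<alpha> y x)"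
    by (rule sum.cong[OF refl])
  also have "\<dots> = (\<Sum>x\<in>Ola. \<Sum>\<alpha>\<in>R. \<Sum>y\<in>orbit R nu. ?t \<alpha> y x)"
    by (subst sum.swap, subst (2) sum.swap, subst sum.swap) (rule refl)
  also have "\<dots> = (\<Sum>x\<in>Ola. weighted_string_count nu x)"
    by (simp add: weighted_string_count_def mult_ac flip: sum.inter_filter[OF finite_orbit])
  finally show ?thesis .
qed

lemma weighted_string_count_weyl:
  assumes "u \<in> W"
  shows "weighted_string_count nu (u x) = weighted_string_count nu x"
proof -
  have "weighted_string_count nu (u x) =
      (\<Sum>\<alpha>\<in>R. g (u \<alpha>) * (u x \<bullet> u \<alpha>) * real (card {y\<in>orbit R nu. string_above (u \<alpha>) y (u x)}))"
    unfolding weighted_string_count_def by (rule sum_roots_weyl[OF assms, symmetric])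
  also have "\<dots> = weighted_string_count nu x"
    using g_weyl[OF assms] card_string_above_weyl[OF assms]
    by (simp add: weighted_string_count_def weyl_inner[OF assms])
  finally show ?thesis .
qed

lemma Dm_off_orbit_count:
  assumes nu: "nu \<notin> Ola"
  shows "Dm nu = real (card (stabilizer R nu)) / real (card (stabilizer R la)) * weighted_string_count nu la"
proof -
  have "(\<Sum>y\<in>orbit R nu. Dm y) = (\<Sum>y\<in>orbit R nu. Dm nu)"
    using Dm_weyl by (intro sum.cong) (auto simp: orbit_iff)
  then have "real (card (orbit R nu)) * Dm nu = (\<Sum>y\<in>orbit R nu. Dm y)"
    by simp
  also have "\<dots> = (\<Sum>x\<in>Ola. weighted_string_count nu la)"
    unfolding sum_Dm_orbit[OF nu] using weighted_string_count_weyl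
    by (intro sum.cong) (auto simp: orbit_iff)
  also have "\<dots> = real (card Ola) * weighted_string_count nu la"
    by simp
  finally have count: "real (card (orbit R nu)) * Dm nu = real (card Ola) * weighted_string_count nu la" .
  have stab: "real (card (orbit R nu)) * real (card (stabilizer R nu)) =
      real (card Ola) * real (card (stabilizer R la))"
    using card_orbit_stabilizer[of nu] card_orbit_stabilizer[of la] by (metis of_nat_mult)
  have pos: "0 < real (card (orbit R nu))" "0 < real (card (stabilizer R la))"
    using card_orbit_pos card_stabilizer_pos by simp_all
  have "Dm nu = real (card Ola) / real (card (orbit R nu)) * weighted_string_count nu la"
    using count pos(1) by (simp add: field_simps)
  also have "real (card Ola) / real (card (orbit R nu)) =
      real (card (stabilizer R nu)) / real (card (stabilizer R la))"
    using stab pos by (simp add: frac_eq_eq mult.commute)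
  finally show ?thesis .
qed

lemma orbit_below_la:
  assumes "nu \<in> dominant R v" "la - nu \<in> pos_cone R v" "y \<in> orbit R nu"
  shows "la - y \<in> pos_cone R v"
  using pos_cone_add[OF assms(2) dominant_minus_orbit_in_pos_cone[OF assms(1,3)]] by simp

lemma no_string_above_la_neg:
  assumes "nu \<in> dominant R v" "la - nu \<in> pos_cone R v" "\<beta> \<in> R" "\<beta> \<notin> Rp"
  shows "{y\<in>orbit R nu. string_above \<beta> y la} = {}"
proof -
  have "- \<beta> \<in> Rp"
    using pos_or_neg_root assms(3,4) by blast
  have False if y: "y \<in> orbit R nu" and above: "string_above \<beta> y la" for y
  proof -
    obtain k :: nat where "la = y + real (Suc k) *\<^sub>R \<beta>"
      using above by (auto simp: string_above_def)
    then have "- (real (Suc k) *\<^sub>R - \<beta>) \<in> pos_cone R v"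
      using orbit_below_la[OF assms(1,2) y] by simp
    then show False
      using neg_pos_root_notin_pos_cone[OF \<open>- \<beta> \<in> Rp\<close>] by blast
  qed
  then show ?thesis by blast
qed

definition string_indices :: "'a \<Rightarrow> 'a \<Rightarrow> nat set" where
  "string_indices nu \<beta> = {k. 1 \<le> k \<and> la - real k *\<^sub>R \<beta> \<in> orbit R nu}"

context
  fixes nu \<beta> :: 'a and m :: nat
  assumes nu_dominant: "nu \<in> dominant R v" and nu_below: "la - nu \<in> pos_cone R v"
    and nu_off: "nu \<notin> Ola" and \<beta>: "\<beta> \<in> Rp" and m: "la \<bullet> coroot \<beta> = real m"
begin

lemma refl_la_string: "refl \<beta> (la - t *\<^sub>R \<beta>) = la - (real m - t) *\<^sub>R \<beta>"
proof -
  have "\<beta> \<bullet> coroot \<beta> = 2"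
    using pos_root_nonzero[OF \<beta>] by (simp add: inner_coroot)
  then have "(la - t *\<^sub>R \<beta>) \<bullet> coroot \<beta> = real m - 2 * t"
    using m by (simp add: inner_diff_left)
  then show ?thesis
    by (simp add: refl_def algebra_simps flip: scaleR_add_left)
qed

lemma string_indices_less:
  assumes "k \<in> string_indices nu \<beta>"
  shows "k < m"
proof (rule ccontr)
  assume "\<not> k < m"
  have in_orbit: "la - real k *\<^sub>R \<beta> \<in> orbit R nu"
    using assms by (simp add: string_indices_def)
  then have "refl \<beta> (la - real k *\<^sub>R \<beta>) \<in> orbit R nu"
    using orbit_closed refl_in_weyl \<beta> pos_roots_subset by blast
  then have "la - (real m - real k) *\<^sub>R \<beta> \<in> orbit R nu"
    by (simp add: refl_la_string)
  show False
  proof (cases "k = m")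
    case True
    \<comment> \<open>then \<open>la - k \<beta> = refl \<beta> la\<close> lies in the orbit of \<open>la\<close>\<close>
    have "refl \<beta> la \<in> Ola"
      using orbit_closed[OF orbit_self refl_in_weyl] \<beta> pos_roots_subset by blast
    then have "la - real k *\<^sub>R \<beta> \<in> Ola"
      using refl_la_string[of 0] True by simp
    then show False
      using in_orbit nu_off orbit_sym orbit_trans by blast
  next
    case False
    have "la - (la - (real m - real k) *\<^sub>R \<beta>) \<in> pos_cone R v"
      by (rule orbit_below_la[OF nu_dominant nu_below]) fact
    moreover have "la - (la - (real m - real k) *\<^sub>R \<beta>) = - (real (k - m) *\<^sub>R \<beta>)"
      using \<open>\<not> k < m\<close> by (simp add: of_nat_diff algebra_simps)
    ultimately have "- (real (k - m) *\<^sub>R \<beta>) \<in> pos_cone R v"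
      by simp
    moreover have "0 < k - m"
      using False \<open>\<not> k < m\<close> by simp
    ultimately show False
      using neg_pos_root_notin_pos_cone[OF \<beta>] by blast
  qed
qed

lemma string_indices_reflect:
  assumes "k \<in> string_indices nu \<beta>"
  shows "m - k \<in> string_indices nu \<beta>"
proof -
  have "refl \<beta> (la - real k *\<^sub>R \<beta>) \<in> orbit R nu"
    using assms orbit_closed refl_in_weyl \<beta> pos_roots_subset by (auto simp: string_indices_def)
  then show ?thesis
    using string_indices_less[OF assms] by (simp add: string_indices_def refl_la_string of_nat_diff)
qed

lemma string_indices_norm:
  assumes "k \<in> string_indices nu \<beta>"
  shows "(norm nu)\<^sup>2 = (norm la)\<^sup>2 - real k * (real m - real k) * (\<beta> \<bullet> \<beta>)"
proof -
  have "norm (la - real k *\<^sub>R \<beta>) = norm nu"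
    using assms orbit_norm by (simp add: string_indices_def)
  then show ?thesis
    using norm_diff_scaleR_sq[OF pos_root_nonzero[OF \<beta>], of la "real k"] m by simp
qed

lemma string_indices_cases:
  assumes "k \<in> string_indices nu \<beta>" "k' \<in> string_indices nu \<beta>"
  shows "k' = k \<or> k' = m - k"
proof -
  have "real k * (real m - real k) * (\<beta> \<bullet> \<beta>) = real k' * (real m - real k') * (\<beta> \<bullet> \<beta>)"
    using string_indices_norm[OF assms(1)] string_indices_norm[OF assms(2)] by linarith
  then have "real k * (real m - real k) = real k' * (real m - real k')"
    using pos_root_nonzero[OF \<beta>] by simp
  moreover have "(real k' - real k) * (real m - real k - real k') =
      real k' * (real m - real k') - real k * (real m - real k)"
    by (simp add: algebra_simps)
  ultimately have "(real k' - real k) * (real m - real k - real k') = 0"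
    by simp
  then show ?thesis
    using string_indices_less[OF assms(1)] by (auto simp: of_nat_diff)
qed

lemma card_string_above_la: "card {y\<in>orbit R nu. string_above \<beta> y la} = card (string_indices nu \<beta>)"
proof -
  have "{y\<in>orbit R nu. string_above \<beta> y la} = (\<lambda>k. la - real k *\<^sub>R \<beta>) ` string_indices nu \<beta>"
  proof (intro equalityI subsetI)
    fix y assume "y \<in> {y\<in>orbit R nu. string_above \<beta> y la}"
    then obtain k :: nat where "la = y + real (Suc k) *\<^sub>R \<beta>" and "y \<in> orbit R nu"
      by (auto simp: string_above_def)
    then have "y = la - real (Suc k) *\<^sub>R \<beta>" "y \<in> orbit R nu"
      by simp_all
    then show "y \<in> (\<lambda>k. la - real k *\<^sub>R \<beta>) ` string_indices nu \<beta>"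
      by (intro image_eqI[of _ _ "Suc k"]) (simp_all add: string_indices_def)
  next
    fix y assume "y \<in> (\<lambda>k. la - real k *\<^sub>R \<beta>) ` string_indices nu \<beta>"
    then obtain k where k: "k \<in> string_indices nu \<beta>" "y = la - real k *\<^sub>R \<beta>"
      by blast
    then have "la = y + real (Suc (k - 1)) *\<^sub>R \<beta>"
      by (simp add: string_indices_def)
    then have "string_above \<beta> y la"
      unfolding string_above_def by blast
    moreover have "y \<in> orbit R nu"
      using k by (simp add: string_indices_def)
    ultimately show "y \<in> {y\<in>orbit R nu. string_above \<beta> y la}"
      by simp
  qed
  moreover have "inj_on (\<lambda>k. la - real k *\<^sub>R \<beta>) (string_indices nu \<beta>)"
    using pos_root_nonzero[OF \<beta>] by (auto simp: inj_on_def)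
  ultimately show ?thesis
    by (simp add: card_image)
qed

lemma root_interval_iff: "\<beta> \<in> root_interval R v la nu \<longleftrightarrow> (\<exists>l\<in>string_indices nu \<beta>. 2 * l \<le> m)"
proof -
  have "real l \<le> of_int \<lfloor>la \<bullet> coroot \<beta> / 2\<rfloor> \<longleftrightarrow> 2 * l \<le> m" for l
  proof -
    have "real l \<le> of_int \<lfloor>real m / 2\<rfloor> \<longleftrightarrow> int l \<le> \<lfloor>real m / 2\<rfloor>"
      by (metis of_int_le_iff of_int_of_nat_eq)
    also have "\<dots> \<longleftrightarrow> real l \<le> real m / 2"
      by (simp add: le_floor_iff)
    also have "\<dots> \<longleftrightarrow> 2 * l \<le> m"
      by linarith
    finally show ?thesis
      by (simp add: m)
  qed
  then show ?thesis
    using \<beta> by (auto simp: root_interval_def string_indices_def)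
qed

lemma nmult_string_index:
  assumes l: "l \<in> string_indices nu \<beta>" and "2 * l \<le> m"
  shows "nmult la nu \<beta> = (if 2 * l = m then 1 else 2)"
proof -
  have "refl \<beta> la = la - real m *\<^sub>R \<beta>"
    using refl_la_string[of 0] by simp
  then have "proj \<beta> la = (1/2) *\<^sub>R (la + la) - (1/2) *\<^sub>R (real m *\<^sub>R \<beta>)"
    by (simp add: proj_def add_diff_eq scaleR_diff_right)
  then have "proj \<beta> la = la - (real m / 2) *\<^sub>R \<beta>"
    by simp
  then have proj_sq: "(norm (proj \<beta> la))\<^sup>2 = (norm la)\<^sup>2 - (real m / 2) * (real m / 2) * (\<beta> \<bullet> \<beta>)"
    using norm_diff_scaleR_sq[OF pos_root_nonzero[OF \<beta>], of la "real m / 2"] m by simp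
  have "norm nu = norm (proj \<beta> la) \<longleftrightarrow> (norm nu)\<^sup>2 = (norm (proj \<beta> la))\<^sup>2"
    by (simp add: power2_eq_iff_nonneg)
  also have "\<dots> \<longleftrightarrow> real l * (real m - real l) * (\<beta> \<bullet> \<beta>) = (real m / 2) * (real m / 2) * (\<beta> \<bullet> \<beta>)"
    unfolding proj_sq string_indices_norm[OF l] by linarith
  \<comment> \<open>\<open>l (m - l) \<le> (m / 2)\<^sup>2\<close>, with equality exactly in the middle of the string\<close>
  also have "\<dots> \<longleftrightarrow> real l * (real m - real l) = (real m / 2) * (real m / 2)"
    using pos_root_nonzero[OF \<beta>] by (intro mult_right_cancel) simp
  also have "\<dots> \<longleftrightarrow> (real m - 2 * real l)\<^sup>2 = 0"
  proof -
    have "(real m - 2 * real l)\<^sup>2 = 4 * ((real m / 2) * (real m / 2) - real l * (real m - real l))"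
      by (simp add: power2_eq_square algebra_simps)
    then show ?thesis by auto
  qed
  also have "\<dots> \<longleftrightarrow> real m = real (2 * l)"
    by simp
  also have "\<dots> \<longleftrightarrow> 2 * l = m"
    by (simp only: of_nat_eq_iff eq_commute)
  finally show ?thesis
    by (simp add: nmult_def)
qed

lemma card_string_above_la_eq:
  "real (card {y\<in>orbit R nu. string_above \<beta> y la}) =
    (if \<beta> \<in> root_interval R v la nu then nmult la nu \<beta> else 0)"
proof (cases "string_indices nu \<beta> = {}")
  case True
  then show ?thesis
    by (simp add: card_string_above_la root_interval_iff)
next
  case False
  then obtain k where k: "k \<in> string_indices nu \<beta>" by blast
  define l where "l = min k (m - k)"
  have l: "l \<in> string_indices nu \<beta>" "2 * l \<le> m"
    using k string_indices_reflect[OF k] string_indices_less[OF k] by (auto simp: l_def min_def)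
  have "string_indices nu \<beta> = {l, m - l}"
    using string_indices_cases[OF l(1)] string_indices_reflect[OF l(1)] l(1) by blast
  then have "card (string_indices nu \<beta>) = (if 2 * l = m then 1 else 2)"
    using l(2) by auto
  then show ?thesis
    using l root_interval_iff nmult_string_index[OF l] by (auto simp: card_string_above_la)
qed

end

lemma la_coroot_nat:
  assumes "\<beta> \<in> Rp"
  obtains m :: nat where "la \<bullet> coroot \<beta> = real m"
proof -
  have "la \<bullet> coroot \<beta> \<in> \<int>" "0 \<le> la \<bullet> coroot \<beta>"
    using la_dominant assms pos_roots_subset by (auto simp: dominant_def weights_def)
  then show ?thesis
    using that by (metis Ints_cases of_int_0_le_iff of_int_of_nat_eq zero_le_imp_eq_int)
qed

lemma string_count_at_la:
  assumes nu: "nu \<in> dominant R v" "la - nu \<in> pos_cone R v" "nu \<notin> Ola" and \<beta>: "\<beta> \<in> R"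
  shows "g \<beta> * (la \<bullet> \<beta>) * real (card {y\<in>orbit R nu. string_above \<beta> y la}) =
    (if \<beta> \<in> root_interval R v la nu then g \<beta> * (la \<bullet> \<beta>) * nmult la nu \<beta> else 0)"
proof (cases "\<beta> \<in> Rp")
  case True
  then obtain m where "la \<bullet> coroot \<beta> = real m"
    by (rule la_coroot_nat)
  then show ?thesis
    using card_string_above_la_eq[OF nu True] by simp
next
  case False
  then show ?thesis
    by (simp add: root_interval_def no_string_above_la_neg[OF nu(1,2) \<beta> False])
qed

lemma Dm_dominant_below:
  assumes nu: "nu \<in> dominant R v" "dom_less R v nu la"
  shows "Dm nu = bcoef R v g la nu"
proof -
  have below: "la - nu \<in> pos_cone R v" and off: "nu \<notin> Ola"
    using nu dominant_orbit_unique[OF la_dominant nu(1)] by (auto simp: dom_less_def dom_le_def)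
  have "root_interval R v la nu \<subseteq> R"
    using pos_roots_subset by (auto simp: root_interval_def)
  then have "weighted_string_count nu la =
      (\<Sum>\<beta>\<in>root_interval R v la nu. g \<beta> * (la \<bullet> \<beta>) * nmult la nu \<beta>)"
    unfolding weighted_string_count_def
    using string_count_at_la[OF nu(1) below off] finite_roots
    by (simp add: sum.If_cases Int_absorb1 cong: sum.cong)
  then show ?thesis
    using Dm_off_orbit_count[OF off] by (simp add: bcoef_def)
qed

lemma Dm_not_below:
  assumes "y \<notin> Ola" "\<not> dom_less R v y la"
  shows "Dm y = 0"
proof -
  have empty: "{x\<in>Ola. string_above \<alpha> y x} = {}" if "\<alpha> \<in> Rp" for \<alpha>
    using string_above_orbit_below[OF _ _ that] assms(2) by blast
  show ?thesis
    unfolding Dm_off_orbit_pos[OF assms(1)] upper_string_sum_def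
    by (intro sum.neutral ballI) (simp add: empty)
qed

lemma Dm_nonweight:
  assumes "y \<notin> weights R"
  shows "Dm y = 0"
proof -
  have "y \<notin> Ola"
    using assms orbit_weights[OF la_weights] by blast
  have "\<not> string_above \<alpha> y x" if "x \<in> Ola" "\<alpha> \<in> Rp" for x \<alpha>
  proof
    assume "string_above \<alpha> y x"
    then obtain k :: nat where "x = y + real (Suc k) *\<^sub>R \<alpha>"
      unfolding string_above_def by blast
    then have "y = x - real (Suc k) *\<^sub>R \<alpha>"
      by simp
    then show False
      using assms weights_diff_root[OF orbit_weights[OF la_weights that(1)]] that(2) pos_roots_subset
      by blast
  qed
  then have empty: "{x\<in>Ola. string_above \<alpha> y x} = {}" if "\<alpha> \<in> Rp" for \<alpha>
    using that by blast
  show ?thesis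
    unfolding Dm_off_orbit_pos[OF \<open>y \<notin> Ola\<close>] upper_string_sum_def
    by (intro sum.neutral ballI) (simp add: empty)
qed

definition expansion :: "'a \<Rightarrow> real" where
  "expansion y = eigval R v g la * orbit_sum R la y +
    (\<Sum>\<mu>\<in>{\<mu>\<in>dominant R v. dom_less R v \<mu> la}. bcoef R v g la \<mu> * orbit_sum R \<mu> y)"

lemma expansion_weyl: "w \<in> W \<Longrightarrow> expansion (w y) = expansion y"
  by (simp add: expansion_def orbit_sum_weyl)

lemma expansion_nonweight:
  assumes "y \<notin> weights R"
  shows "expansion y = 0"
proof -
  have "orbit_sum R \<mu> y = 0" if "\<mu> \<in> dominant R v" for \<mu>
    using assms orbit_weights that by (auto simp: orbit_sum_eq dominant_iff)
  then show ?thesis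
    using la_dominant by (simp add: expansion_def)
qed

lemma Dm_eq_expansion_dominant:
  assumes nu: "nu \<in> dominant R v"
  shows "Dm nu = expansion nu"
proof -
  let ?D = "{\<mu>\<in>dominant R v. dom_less R v \<mu> la}"
  have orbit_sum_nu: "orbit_sum R \<mu> nu = (if \<mu> = nu then 1 else 0)" if "\<mu> \<in> dominant R v" for \<mu>
    using dominant_orbit_unique[OF that nu] orbit_self by (auto simp: orbit_sum_eq)
  have "(\<Sum>\<mu>\<in>?D. bcoef R v g la \<mu> * orbit_sum R \<mu> nu) = (\<Sum>\<mu>\<in>?D. if \<mu> = nu then bcoef R v g la \<mu> else 0)"
    using orbit_sum_nu by (intro sum.cong) auto
  also have "\<dots> = (if nu \<in> ?D then bcoef R v g la nu else 0)"
    using finite_dominant_below[OF la_dominant] by (simp add: sum.delta')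
  finally have "expansion nu = eigval R v g la * (if la = nu then 1 else 0) +
      (if dom_less R v nu la then bcoef R v g la nu else 0)"
    using orbit_sum_nu[OF la_dominant] nu by (simp add: expansion_def)
  moreover have "nu \<notin> Ola" if "nu \<noteq> la"
    using dominant_orbit_unique[OF la_dominant nu] that by blast
  ultimately show ?thesis
    using Dm_la Dm_dominant_below[OF nu] Dm_not_below by (auto simp: dom_less_def)
qed

lemma Dm_eq_expansion: "Dm y = expansion y"
proof (cases "y \<in> weights R")
  case True
  then obtain \<mu> w where "\<mu> \<in> dominant R v" "w \<in> W" "y = w \<mu>"
    using exists_dominant_in_orbit by (metis orbit_iff)
  then show ?thesis
    using Dm_weyl expansion_weyl Dm_eq_expansion_dominant by simp
qed (simp add: Dm_nonweight expansion_nonweight)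

end

theorem mainTheorem5:
  fixes R :: "'a::euclidean_space set" and v :: 'a and g :: "'a \<Rightarrow> real" and la :: 'a
  assumes "root_system R" and "irreducible_rs R"
    and "regular_vec R v"
    and "\<And>w \<alpha>. w \<in> weyl R \<Longrightarrow> \<alpha> \<in> R \<Longrightarrow> g (w \<alpha>) = g \<alpha>"
    and "la \<in> dominant R v"
  shows "hyp_op R v g (orbit_sum R la) =
    (%\<nu>. eigval R v g la * orbit_sum R la \<nu> +
        (\<Sum>\<mu>\<in>{\<mu>\<in>dominant R v. dom_less R v \<mu> la}. bcoef R v g la \<mu> * orbit_sum R \<mu> \<nu>))"
proof -
  interpret hypergeometric R v g la
    using assms by unfold_locales auto
  show ?thesis
    using Dm_eq_expansion by (simp add: fun_eq_iff expansion_def)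
qed

end
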